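(* Let $\mathbb{k}$ be a field of characteristic $0$ containing a primitive $n$-th root of unity $\omega$, let $H=T_{n^2}(\omega)$ be the Taft Hopf algebra, and let $A=\mathbb{k}[z]/(z^n-\omega)$ with $u$ the image of $z$. Let $a_i=(\omega-1)^i\omega^{i(i+1)/2}$ and let $\rho:A\to H\otimes A$ be the algebra homomorphism determined by $\rho(u)=\sum_{i=0}^{n-1}a_i\,x^ig^{-(i+1)}\otimes u^{i+1}$. Then $A$ is an $H$-comodule algebra via $\rho$, i.e. $(\mathrm{id}\otimes\rho)\rho=(\Delta\otimes\mathrm{id})\rho$.
   Context: The Taft Hopf algebra is $H=T_{n^2}(\omega)=\mathbb{k}\langle x,g\mid x^n=0,\ g^n=1,\ xg=\omega gx\rangle$ with $\Delta(g)=g\otimes g$, $\Delta(x)=x\otimes 1+g\otimes x$, $\epsilon(g)=1$, $\epsilon(x)=0$, $S(g)=g^{-1}$, $S(x)=-g^{-1}x$. The assignment $u\mapsto\rho(u)$ extends to an algebra homomorphism since $\rho(u)^n=\omega(1\otimes1)$. *)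

theory Defs
  imports Main
begin

text \<open>Vectors over a field with respect to a fixed finite basis indexed by 'b are
  represented by coefficient functions 'b \<Rightarrow> 'k (only values on the basis matter).
  A finite-dimensional algebra is given by its basis set and the product of basis
  elements, m p q = (c, r) meaning  e_p * e_q = c * e_r.\<close>

definition vmul :: "'b set \<Rightarrow> ('b \<Rightarrow> 'b \<Rightarrow> 'k \<times> 'b) \<Rightarrow> ('b \<Rightarrow> 'k::field) \<Rightarrow> ('b \<Rightarrow> 'k) \<Rightarrow> ('b \<Rightarrow> 'k)" where
  "vmul B m v w = (\<lambda>b. \<Sum>p\<in>B. \<Sum>q\<in>B. if snd (m p q) = b then v p * w q * fst (m p q) else 0)"

definition vunit :: "'b \<Rightarrow> ('b \<Rightarrow> 'k::field)" where
  "vunit e = (\<lambda>b. if b = e then 1 else 0)"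

definition vpow :: "'b set \<Rightarrow> ('b \<Rightarrow> 'b \<Rightarrow> 'k \<times> 'b) \<Rightarrow> 'b \<Rightarrow> ('b \<Rightarrow> 'k::field) \<Rightarrow> nat \<Rightarrow> ('b \<Rightarrow> 'k)" where
  "vpow B m e v k = (vmul B m v ^^ k) (vunit e)"

definition lin :: "'b set \<Rightarrow> ('b \<Rightarrow> ('c \<Rightarrow> 'k::field)) \<Rightarrow> ('b \<Rightarrow> 'k) \<Rightarrow> ('c \<Rightarrow> 'k)" where
  "lin B f v = (\<lambda>c. \<Sum>p\<in>B. v p * f p c)"

definition vtensor :: "('b \<Rightarrow> 'k::field) \<Rightarrow> ('c \<Rightarrow> 'k) \<Rightarrow> ('b \<times> 'c \<Rightarrow> 'k)" where
  "vtensor v w = (\<lambda>(p, q). v p * w q)"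

definition tensor_bm :: "('b \<Rightarrow> 'b \<Rightarrow> 'k \<times> 'b) \<Rightarrow> ('c \<Rightarrow> 'c \<Rightarrow> 'k \<times> 'c)
    \<Rightarrow> ('b \<times> 'c) \<Rightarrow> ('b \<times> 'c) \<Rightarrow> ('k::field) \<times> ('b \<times> 'c)" where
  "tensor_bm m1 m2 = (\<lambda>(p1, p2) (q1, q2).
      (fst (m1 p1 q1) * fst (m2 p2 q2), (snd (m1 p1 q1), snd (m2 p2 q2))))"

text \<open>PBW basis x^i g^j, 0 \<le> i, j < n, indexed by (i, j). From x g = \<omega> g x one gets
  g^j x^k = \<omega>^(-jk) x^k g^j, hence
  (x^i g^j)(x^k g^l) = \<omega>^(-jk) x^(i+k) g^((j+l) mod n), which is 0 if i+k \<ge> n.\<close>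
definition taft_basis :: "nat \<Rightarrow> (nat \<times> nat) set" where
  "taft_basis n = {0..<n} \<times> {0..<n}"

definition taft_bm :: "nat \<Rightarrow> 'k::field \<Rightarrow> nat \<times> nat \<Rightarrow> nat \<times> nat \<Rightarrow> 'k \<times> (nat \<times> nat)" where
  "taft_bm n \<omega> = (\<lambda>(i, j) (k, l).
      if i + k < n then ((inverse \<omega>) ^ (j * k), (i + k, (j + l) mod n)) else (0, (0, 0)))"

definition taft_x :: "nat \<times> nat \<Rightarrow> 'k::field" where "taft_x = vunit (1, 0)"
definition taft_g :: "nat \<times> nat \<Rightarrow> 'k::field" where "taft_g = vunit (0, 1)"

text \<open>g^{-1} = g^{n-1} since g^n = 1.\<close>
definition taft_ginv :: "nat \<Rightarrow> 'k::field \<Rightarrow> nat \<times> nat \<Rightarrow> 'k" where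
  "taft_ginv n \<omega> = vpow (taft_basis n) (taft_bm n \<omega>) (0, 0) taft_g (n - 1)"

definition HH_basis :: "nat \<Rightarrow> ((nat \<times> nat) \<times> (nat \<times> nat)) set" where
  "HH_basis n = taft_basis n \<times> taft_basis n"
definition HH_bm :: "nat \<Rightarrow> 'k::field \<Rightarrow> _" where
  "HH_bm n \<omega> = tensor_bm (taft_bm n \<omega>) (taft_bm n \<omega>)"

text \<open>Comultiplication: the algebra map with \<Delta>(g) = g \<otimes> g, \<Delta>(x) = x \<otimes> 1 + g \<otimes> x;
  on basis elements \<Delta>(x^i g^j) = \<Delta>(x)^i \<Delta>(g)^j.\<close>
definition taft_Delta_x :: "(nat \<times> nat) \<times> (nat \<times> nat) \<Rightarrow> 'k::field" where
  "taft_Delta_x = (\<lambda>b. vtensor taft_x (vunit (0, 0)) b + vtensor taft_g taft_x b)"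
definition taft_Delta_g :: "(nat \<times> nat) \<times> (nat \<times> nat) \<Rightarrow> 'k::field" where
  "taft_Delta_g = vtensor taft_g taft_g"

definition taft_Delta_basis :: "nat \<Rightarrow> 'k::field \<Rightarrow> nat \<times> nat \<Rightarrow> (nat \<times> nat) \<times> (nat \<times> nat) \<Rightarrow> 'k" where
  "taft_Delta_basis n \<omega> = (\<lambda>(i, j). vmul (HH_basis n) (HH_bm n \<omega>)
      (vpow (HH_basis n) (HH_bm n \<omega>) ((0, 0), (0, 0)) taft_Delta_x i)
      (vpow (HH_basis n) (HH_bm n \<omega>) ((0, 0), (0, 0)) taft_Delta_g j))"

section \<open>A = k[z]/(z^n - \<omega>), basis u^k, 0 \<le> k < n\<close>

definition A_basis :: "nat \<Rightarrow> nat set" where "A_basis n = {0..<n}"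
definition A_bm :: "nat \<Rightarrow> 'k::field \<Rightarrow> nat \<Rightarrow> nat \<Rightarrow> 'k \<times> nat" where
  "A_bm n \<omega> = (\<lambda>k l. (if k + l < n then 1 else \<omega>, (k + l) mod n))"
definition A_u :: "nat \<Rightarrow> 'k::field" where "A_u = vunit 1"

definition HA_basis :: "nat \<Rightarrow> ((nat \<times> nat) \<times> nat) set" where
  "HA_basis n = taft_basis n \<times> A_basis n"
definition HA_bm :: "nat \<Rightarrow> 'k::field \<Rightarrow> _" where
  "HA_bm n \<omega> = tensor_bm (taft_bm n \<omega>) (A_bm n \<omega>)"

definition coef_a :: "'k::field \<Rightarrow> nat \<Rightarrow> 'k" where
  "coef_a \<omega> i = (\<omega> - 1) ^ i * \<omega> ^ (i * (i + 1) div 2)"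

definition rho_u :: "nat \<Rightarrow> 'k::field \<Rightarrow> (nat \<times> nat) \<times> nat \<Rightarrow> 'k" where
  "rho_u n \<omega> = (\<lambda>b. \<Sum>i<n. coef_a \<omega> i *
      vtensor (vmul (taft_basis n) (taft_bm n \<omega>)
                 (vpow (taft_basis n) (taft_bm n \<omega>) (0, 0) taft_x i)
                 (vpow (taft_basis n) (taft_bm n \<omega>) (0, 0) (taft_ginv n \<omega>) (i + 1)))
              (vpow (A_basis n) (A_bm n \<omega>) 0 A_u (i + 1)) b)"

definition rho :: "nat \<Rightarrow> 'k::field \<Rightarrow> (nat \<Rightarrow> 'k) \<Rightarrow> ((nat \<times> nat) \<times> nat \<Rightarrow> 'k)" where
  "rho n \<omega> = lin (A_basis n) (\<lambda>k. vpow (HA_basis n) (HA_bm n \<omega>) ((0, 0), 0) (rho_u n \<omega>) k)"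

text \<open>H \<otimes> H \<otimes> A is indexed by (p, (q, k)).
  (id \<otimes> \<rho>)(e_p \<otimes> u^k) = e_p \<otimes> \<rho>(u^k);  (\<Delta> \<otimes> id)(e_p \<otimes> u^k) = \<Delta>(e_p) \<otimes> u^k.\<close>
definition id_tensor_rho :: "nat \<Rightarrow> 'k::field \<Rightarrow> ((nat \<times> nat) \<times> nat \<Rightarrow> 'k)
    \<Rightarrow> ((nat \<times> nat) \<times> ((nat \<times> nat) \<times> nat) \<Rightarrow> 'k)" where
  "id_tensor_rho n \<omega> = lin (HA_basis n)
      (\<lambda>(p, k). vtensor (vunit p) (rho n \<omega> (vunit k)))"

definition Delta_tensor_id :: "nat \<Rightarrow> 'k::field \<Rightarrow> ((nat \<times> nat) \<times> nat \<Rightarrow> 'k)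
    \<Rightarrow> ((nat \<times> nat) \<times> ((nat \<times> nat) \<times> nat) \<Rightarrow> 'k)" where
  "Delta_tensor_id n \<omega> = lin (HA_basis n)
      (\<lambda>(p, k). (\<lambda>(p1, (p2, l)). vtensor (taft_Delta_basis n \<omega> p) (vunit k) ((p1, p2), l)))"

definition primitive_root :: "nat \<Rightarrow> 'k::field \<Rightarrow> bool" where
  "primitive_root n \<omega> \<longleftrightarrow> 0 < n \<and> \<omega> ^ n = 1 \<and> (\<forall>k. 0 < k \<and> k < n \<longrightarrow> \<omega> ^ k \<noteq> 1)"

end

theory Submission
  imports Defs "HOL-Library.Function_Algebras" "HOL-Computational_Algebra.Polynomial"
begin

text \<open>Put \<open>T = \<omega>(\<omega> - 1) x g^-1 \<otimes> u\<close> and \<open>G = g^-1 \<otimes> u\<close> in \<open>H \<otimes> A\<close>. The i-th summand of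
  \<open>\<rho>(u)\<close> is \<open>T^i G\<close>, so \<open>\<rho>(u) = (1 + T + ... + T^(n-1)) G\<close> with \<open>T^n = 0\<close>, i.e.
  \<open>(1 - T) \<rho>(u) = G\<close>; moreover \<open>G T = \<omega> T G\<close>. Moving \<open>G\<close> to the left gives
  \<open>(\<Prod>j<k. 1 - \<omega>^j T) \<rho>(u)^k = G^k\<close>, and for \<open>k = n\<close> the product is \<open>1 - T^n = 1\<close>, so
  \<open>\<rho>(u)^n = G^n = \<omega>\<close> and \<open>\<rho>\<close> is a well-defined algebra map. The comultiplication is
  multiplicative because \<open>\<Delta>(x)^n = 0\<close>, by the q-binomial theorem at the primitive root \<open>\<omega>^-1\<close>.
  So \<open>id \<otimes> \<rho>\<close> and \<open>\<Delta> \<otimes> id\<close> are algebra maps on \<open>H \<otimes> A\<close>, and applying them to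
  \<open>(1 - T) \<rho>(u) = G\<close> shows that both images of \<open>\<rho>(u)\<close> solve \<open>(1 - N) Z = g^-1 \<otimes> G\<close>, where
  \<open>N = 1 \<otimes> T + \<omega>(\<omega> - 1) x g^-1 \<otimes> G\<close> is nilpotent. Hence they coincide, and the two maps then
  agree on all powers of \<open>\<rho>(u)\<close>.\<close>

text \<open>Vectors are coefficient functions, manipulated as elements of the function space; pointwise
  expansion of sums and differences would get in the way of the algebraic laws below.\<close>

declare plus_fun_apply [simp del] zero_fun_apply [simp del] minus_apply [simp del]
lemmas fun_arith_apply = plus_fun_apply zero_fun_apply minus_apply

definition vscale :: "'k::field \<Rightarrow> ('b \<Rightarrow> 'k) \<Rightarrow> ('b \<Rightarrow> 'k)" where
  "vscale c v = (\<lambda>b. c * v b)"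

definition supported_on :: "'b set \<Rightarrow> ('b \<Rightarrow> 'k::zero) \<Rightarrow> bool" where
  "supported_on B v \<longleftrightarrow> (\<forall>b. b \<notin> B \<longrightarrow> v b = 0)"

definition basis_expansion :: "'b set \<Rightarrow> ('b \<Rightarrow> 'k::field) \<Rightarrow> ('b \<Rightarrow> 'k)" where
  "basis_expansion B v = (\<Sum>p\<in>B. vscale (v p) (vunit p))"

lemma vscale_apply: "vscale c v b = c * v b"
  by (simp add: vscale_def)

lemma sum_fun_apply: "(\<Sum>i\<in>I. f i) x = (\<Sum>i\<in>I. f i x)"
  by (induction I rule: infinite_finite_induct) (auto simp: fun_arith_apply)

lemma vscale_vscale [simp]: "vscale a (vscale b v) = vscale (a * b) v"
  by (rule ext) (simp add: vscale_apply)
lemma vscale_one [simp]: "vscale 1 v = v"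
  by (rule ext) (simp add: vscale_apply)
lemma vscale_zero_left [simp]: "vscale 0 v = 0"
  by (rule ext) (simp add: fun_arith_apply vscale_apply)
lemma vscale_zero_right [simp]: "vscale a 0 = 0"
  by (rule ext) (simp add: fun_arith_apply vscale_apply)
lemma vscale_add_right: "vscale a (v + w) = vscale a v + vscale a w"
  by (rule ext) (simp add: fun_arith_apply vscale_apply algebra_simps)
lemma vscale_add_left: "vscale (a + b) v = vscale a v + vscale b v"
  by (rule ext) (simp add: fun_arith_apply vscale_apply algebra_simps)
lemma vscale_sum: "vscale a (\<Sum>i\<in>I. f i) = (\<Sum>i\<in>I. vscale a (f i))"
  by (rule ext) (simp add: vscale_apply sum_fun_apply sum_distrib_left)

lemma vunit_sym: "vunit p q = vunit q p"
  by (simp add: vunit_def)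

lemma sum_vunit_mult:
  assumes "q0 \<in> B" "finite B"
  shows "(\<Sum>q\<in>B. vunit q0 q * G q) = G q0"
proof -
  have "(\<Sum>q\<in>B. vunit q0 q * G q) = (\<Sum>q\<in>B. if q0 = q then G q else 0)"
    by (rule sum.cong) (auto simp: vunit_def)
  then show ?thesis using assms by (simp add: sum.delta)
qed

lemma sum_mult_vunit:
  assumes "q0 \<in> B" "finite B"
  shows "(\<Sum>q\<in>B. G q * vunit q0 q) = G q0"
  using sum_vunit_mult[OF assms, of G] by (simp add: mult.commute)

lemma basis_expansion_apply: "finite B \<Longrightarrow> p \<in> B \<Longrightarrow> basis_expansion B v p = v p"
  unfolding basis_expansion_def sum_fun_apply vscale_apply
  by (subst vunit_sym) (rule sum_mult_vunit)

lemma basis_expansion_supported: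
  assumes "finite B" "supported_on B v"
  shows "basis_expansion B v = v"
proof (rule ext)
  fix b
  show "basis_expansion B v b = v b"
  proof (cases "b \<in> B")
    case True
    then show ?thesis using assms(1) by (simp add: basis_expansion_apply)
  next
    case False
    then have "basis_expansion B v b = 0"
      unfolding basis_expansion_def sum_fun_apply vscale_apply
      by (intro sum.neutral) (auto simp: vunit_def)
    then show ?thesis using False assms(2) by (simp add: supported_on_def)
  qed
qed

lemma supported_on_add:
  "supported_on B (v :: _ \<Rightarrow> 'k::field) \<Longrightarrow> supported_on B w \<Longrightarrow> supported_on B (v + w)"
  by (auto simp: supported_on_def fun_arith_apply)
lemma supported_on_diff:
  "supported_on B (v :: _ \<Rightarrow> 'k::field) \<Longrightarrow> supported_on B w \<Longrightarrow> supported_on B (v - w)"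
  by (auto simp: supported_on_def fun_arith_apply)
lemma supported_on_vscale: "supported_on B v \<Longrightarrow> supported_on B (vscale c v)"
  by (simp add: supported_on_def vscale_apply)
lemma supported_on_zero: "supported_on B 0"
  by (simp add: supported_on_def fun_arith_apply)
lemma supported_on_sum:
  "(\<And>i. i \<in> I \<Longrightarrow> supported_on B (f i)) \<Longrightarrow> supported_on B (\<Sum>i\<in>I. f i)"
  by (simp add: supported_on_def sum_fun_apply)
lemma supported_on_vunit: "p \<in> B \<Longrightarrow> supported_on B (vunit p)"
  by (simp add: supported_on_def vunit_def)

lemma vmul_expand:
  "vmul B m v w b = (\<Sum>p\<in>B. \<Sum>q\<in>B. v p * w q * (if snd (m p q) = b then fst (m p q) else 0))"
  unfolding vmul_def by (intro sum.cong refl) simp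

lemma vmul_add_left: "vmul B m (v + w) z = vmul B m v z + vmul B m w z"
  by (rule ext) (simp add: fun_arith_apply vmul_expand sum.distrib[symmetric] algebra_simps)
lemma vmul_add_right: "vmul B m z (v + w) = vmul B m z v + vmul B m z w"
  by (rule ext) (simp add: fun_arith_apply vmul_expand sum.distrib[symmetric] algebra_simps)
lemma vmul_diff_left: "vmul B m (v - w) z = vmul B m v z - vmul B m w z"
  by (rule ext) (simp add: fun_arith_apply vmul_expand sum_subtractf[symmetric] algebra_simps)
lemma vmul_diff_right: "vmul B m z (v - w) = vmul B m z v - vmul B m z w"
  by (rule ext) (simp add: fun_arith_apply vmul_expand sum_subtractf[symmetric] algebra_simps)
lemma vmul_vscale_left: "vmul B m (vscale c v) z = vscale c (vmul B m v z)"
  by (rule ext) (simp add: vscale_apply vmul_expand sum_distrib_left algebra_simps)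
lemma vmul_vscale_right: "vmul B m z (vscale c v) = vscale c (vmul B m z v)"
  by (rule ext) (simp add: vscale_apply vmul_expand sum_distrib_left algebra_simps)
lemma vmul_zero_left: "vmul B m 0 z = 0"
  by (rule ext) (simp add: fun_arith_apply vmul_expand)
lemma vmul_zero_right: "vmul B m z 0 = 0"
  by (rule ext) (simp add: fun_arith_apply vmul_expand)

lemma vmul_sum_left: "vmul B m (\<Sum>i\<in>I. f i) z = (\<Sum>i\<in>I. vmul B m (f i) z)"
  by (induction I rule: infinite_finite_induct) (simp_all add: vmul_zero_left vmul_add_left)
lemma vmul_sum_right: "vmul B m z (\<Sum>i\<in>I. f i) = (\<Sum>i\<in>I. vmul B m z (f i))"
  by (induction I rule: infinite_finite_induct) (simp_all add: vmul_zero_right vmul_add_right)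

lemma vmul_vunit:
  assumes "p \<in> B" "q \<in> B" "finite B"
  shows "vmul B m (vunit p) (vunit q) = vscale (fst (m p q)) (vunit (snd (m p q)))"
proof (rule ext)
  fix b
  have "vmul B m (vunit p) (vunit q) b
      = (\<Sum>p'\<in>B. vunit p p' * (\<Sum>q'\<in>B. vunit q q' *
           (if snd (m p' q') = b then fst (m p' q') else 0)))"
    by (simp add: vmul_expand sum_distrib_left mult.assoc)
  also have "\<dots> = (if snd (m p q) = b then fst (m p q) else 0)"
    using assms by (simp add: sum_vunit_mult)
  finally show "vmul B m (vunit p) (vunit q) b = vscale (fst (m p q)) (vunit (snd (m p q))) b"
    by (simp add: vscale_apply vunit_def)
qed

lemma vmul_cong:
  "(\<And>p. p \<in> B \<Longrightarrow> u p = u' p) \<Longrightarrow> (\<And>q. q \<in> B \<Longrightarrow> v q = v' q) \<Longrightarrow> vmul B m u v = vmul B m u' v'"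
  by (intro ext) (simp add: vmul_expand)

lemma vmul_basis_expansion:
  "finite B \<Longrightarrow> vmul B m u v = vmul B m (basis_expansion B u) (basis_expansion B v)"
  by (rule vmul_cong) (simp_all add: basis_expansion_apply)

text \<open>The axioms need associativity of basis products only when the coefficient is nonzero,
  because the Taft algebra records the vanishing product \<open>x^i x^k\<close> (\<open>i + k \<ge> n\<close>) with the
  dummy basis element \<open>(0, 0)\<close>.\<close>

locale basis_algebra =
  fixes B :: "'b set" and m :: "'b \<Rightarrow> 'b \<Rightarrow> 'k::field \<times> 'b" and e :: 'b
  assumes finite_basis: "finite B" and unit_in_basis: "e \<in> B"
    and mult_closed: "p \<in> B \<Longrightarrow> q \<in> B \<Longrightarrow> snd (m p q) \<in> B"
    and unit_mult: "p \<in> B \<Longrightarrow> m e p = (1, p)"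
    and mult_unit: "p \<in> B \<Longrightarrow> m p e = (1, p)"
    and basis_mult_assoc: "p \<in> B \<Longrightarrow> q \<in> B \<Longrightarrow> s \<in> B \<Longrightarrow>
       fst (m p q) * fst (m (snd (m p q)) s) = fst (m q s) * fst (m p (snd (m q s))) \<and>
       (fst (m p q) * fst (m (snd (m p q)) s) \<noteq> 0 \<longrightarrow>
          snd (m (snd (m p q)) s) = snd (m p (snd (m q s))))"
begin

lemma supported_vmul: "supported_on B (vmul B m u v)"
  by (auto simp: supported_on_def vmul_expand intro!: sum.neutral dest: mult_closed)

lemma vmul_vunit_assoc:
  assumes "p \<in> B" "q \<in> B" "s \<in> B"
  shows "vmul B m (vmul B m (vunit p) (vunit q)) (vunit s)
       = vmul B m (vunit p) (vmul B m (vunit q) (vunit s))"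
proof -
  have L: "vmul B m (vmul B m (vunit p) (vunit q)) (vunit s)
      = vscale (fst (m p q) * fst (m (snd (m p q)) s)) (vunit (snd (m (snd (m p q)) s)))"
    using assms finite_basis mult_closed by (simp add: vmul_vunit vmul_vscale_left)
  have R: "vmul B m (vunit p) (vmul B m (vunit q) (vunit s))
      = vscale (fst (m q s) * fst (m p (snd (m q s)))) (vunit (snd (m p (snd (m q s)))))"
    using assms finite_basis mult_closed by (simp add: vmul_vunit vmul_vscale_right)
  show ?thesis
    unfolding L R using basis_mult_assoc[OF assms]
    by (cases "fst (m p q) * fst (m (snd (m p q)) s) = 0") auto
qed

lemma vmul_assoc: "vmul B m (vmul B m u v) w = vmul B m u (vmul B m v w)"
proof -
  let ?E = "basis_expansion B"
  have "vmul B m (vmul B m u v) w = vmul B m (vmul B m (?E u) (?E v)) (?E w)"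
    by (subst vmul_basis_expansion[OF finite_basis, of m u v])
      (rule vmul_cong, simp_all add: basis_expansion_apply finite_basis)
  also have "\<dots> = vmul B m (?E u) (vmul B m (?E v) (?E w))"
    unfolding basis_expansion_def vmul_sum_left vmul_sum_right vmul_vscale_left vmul_vscale_right
      vscale_sum
    by (intro sum.cong refl) (simp only: vmul_vunit_assoc)
  also have "\<dots> = vmul B m u (vmul B m v w)"
    by (rule sym, subst vmul_basis_expansion[OF finite_basis, of m v w])
      (rule vmul_cong, simp_all add: basis_expansion_apply finite_basis)
  finally show ?thesis .
qed

lemma vmul_unit_left:
  assumes "supported_on B v"
  shows "vmul B m (vunit e) v = v"
proof -
  have "vmul B m (vunit e) v = vmul B m (vunit e) (basis_expansion B v)"
    using finite_basis by (intro vmul_cong) (simp_all add: basis_expansion_apply)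
  also have "\<dots> = basis_expansion B v"
    unfolding basis_expansion_def vmul_sum_right vmul_vscale_right
    using finite_basis unit_in_basis by (intro sum.cong refl) (simp add: vmul_vunit unit_mult)
  finally show ?thesis using basis_expansion_supported[OF finite_basis assms] by simp
qed

lemma vmul_unit_right:
  assumes "supported_on B v"
  shows "vmul B m v (vunit e) = v"
proof -
  have "vmul B m v (vunit e) = vmul B m (basis_expansion B v) (vunit e)"
    using finite_basis by (intro vmul_cong) (simp_all add: basis_expansion_apply)
  also have "\<dots> = basis_expansion B v"
    unfolding basis_expansion_def vmul_sum_left vmul_vscale_left
    using finite_basis unit_in_basis by (intro sum.cong refl) (simp add: vmul_vunit mult_unit)
  finally show ?thesis using basis_expansion_supported[OF finite_basis assms] by simp
qed

lemma vpow_0: "vpow B m e v 0 = vunit e"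
  by (simp add: vpow_def)
lemma vpow_Suc: "vpow B m e v (Suc k) = vmul B m v (vpow B m e v k)"
  by (simp add: vpow_def)

lemma supported_unit: "supported_on B (vunit e)"
  by (rule supported_on_vunit[OF unit_in_basis])

lemma supported_vpow: "supported_on B (vpow B m e v k)"
  by (cases k) (simp_all add: vpow_0 vpow_Suc supported_unit supported_vmul)

lemma vpow_add: "vpow B m e v (a + b) = vmul B m (vpow B m e v a) (vpow B m e v b)"
  by (induction a) (simp_all add: vpow_0 vpow_Suc vmul_unit_left supported_vpow vmul_assoc)

lemma one_minus_mult_geometric_sum:
  assumes "supported_on B Z"
  shows "vmul B m (vunit e - Y) (\<Sum>i<k. vmul B m (vpow B m e Y i) Z)
       = Z - vmul B m (vpow B m e Y k) Z"
proof (induction k)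
  case 0
  then show ?case by (simp add: vmul_zero_right vpow_0 vmul_unit_left assms)
next
  case (Suc k)
  have "vmul B m (vunit e - Y) (vmul B m (vpow B m e Y k) Z)
      = vmul B m (vpow B m e Y k) Z - vmul B m (vpow B m e Y (Suc k)) Z"
    by (simp add: vmul_diff_left vmul_unit_left supported_vmul vpow_Suc vmul_assoc)
  then show ?case using Suc by (simp add: vmul_add_right)
qed

lemma nilpotent_one_minus_cancel:
  assumes "supported_on B Z" "vmul B m (vunit e - N) Z = 0" "vpow B m e N k = 0"
  shows "Z = 0"
proof -
  have Z: "Z = vmul B m N Z"
    using assms(2) by (simp add: vmul_diff_left vmul_unit_left assms(1))
  have "Z = vmul B m (vpow B m e N j) Z" for j
  proof (induction j)
    case 0
    then show ?case by (simp add: vpow_0 vmul_unit_left assms(1))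
  next
    case (Suc j)
    have "Z = vmul B m N (vmul B m (vpow B m e N j) Z)"
      using Z Suc by simp
    then show ?case by (simp add: vpow_Suc vmul_assoc)
  qed
  from this[of k] show ?thesis by (simp add: assms(3) vmul_zero_left)
qed

lemma qcommute_vpow:
  assumes "supported_on B Y" and YX: "vmul B m Y X = vscale q (vmul B m X Y)"
  shows "vmul B m Y (vpow B m e X i) = vscale (q ^ i) (vmul B m (vpow B m e X i) Y)"
proof (induction i)
  case 0
  then show ?case by (simp add: vpow_0 vmul_unit_left vmul_unit_right assms(1))
next
  case (Suc i)
  have "vmul B m Y (vpow B m e X (Suc i)) = vscale q (vmul B m X (vmul B m Y (vpow B m e X i)))"
    by (simp add: vpow_Suc YX vmul_vscale_left vmul_assoc[symmetric])
  also have "\<dots> = vscale (q ^ Suc i) (vmul B m (vpow B m e X (Suc i)) Y)"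
    by (simp add: Suc vmul_vscale_right vpow_Suc vmul_assoc)
  finally show ?case .
qed

lemma qcommute_vpow_vpow:
  assumes "supported_on B Y" and YX: "vmul B m Y X = vscale q (vmul B m X Y)"
  shows "vmul B m (vpow B m e Y j) (vpow B m e X k)
       = vscale (q ^ (k * j)) (vmul B m (vpow B m e X k) (vpow B m e Y j))"
proof (induction j)
  case 0
  then show ?case by (simp add: vpow_0 vmul_unit_left vmul_unit_right supported_vpow)
next
  case (Suc j)
  have "vmul B m (vpow B m e Y (Suc j)) (vpow B m e X k)
      = vscale (q ^ (k * j)) (vmul B m (vmul B m Y (vpow B m e X k)) (vpow B m e Y j))"
    by (simp add: vpow_Suc vmul_assoc Suc vmul_vscale_right)
  also have "\<dots> = vscale (q ^ (k * Suc j)) (vmul B m (vpow B m e X k) (vpow B m e Y (Suc j)))"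
    by (simp add: qcommute_vpow[OF assms] vmul_vscale_left vpow_Suc vmul_assoc power_add
        mult.commute)
  finally show ?case .
qed

end

subsection \<open>The q-binomial theorem\<close>

fun qbinom_coeff :: "'a::comm_ring_1 \<Rightarrow> nat \<Rightarrow> nat \<Rightarrow> 'a" where
  "qbinom_coeff q 0 i = (if i = 0 then 1 else 0)"
| "qbinom_coeff q (Suc k) 0 = 1"
| "qbinom_coeff q (Suc k) (Suc i) = qbinom_coeff q k i + q ^ Suc i * qbinom_coeff q k (Suc i)"

lemma qbinom_coeff_0_right [simp]: "qbinom_coeff q k 0 = 1"
  by (cases k) simp_all

lemma qbinom_coeff_eq_0: "k < i \<Longrightarrow> qbinom_coeff q k i = 0"
proof (induction k arbitrary: i)
  case (Suc k)
  then obtain i' where "i = Suc i'" by (cases i) auto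
  with Suc show ?case by simp
qed simp

lemma qbinom_coeff_mult_prod:
  "qbinom_coeff q k i * (\<Prod>j<i. 1 - q ^ (j + 1)) = (\<Prod>j<i. 1 - q ^ (k - j))"
proof (induction k arbitrary: i)
  case 0
  then show ?case by (cases i) (simp_all add: prod.lessThan_Suc)
next
  case (Suc k)
  show ?case
  proof (cases i)
    case 0
    then show ?thesis by simp
  next
    case (Suc i')
    have "qbinom_coeff q (Suc k) (Suc i') * (\<Prod>j<Suc i'. 1 - q ^ (j + 1))
        = qbinom_coeff q k i' * (\<Prod>j<i'. 1 - q ^ (j + 1)) * (1 - q ^ Suc i')
          + q ^ Suc i' * (qbinom_coeff q k (Suc i') * (\<Prod>j<Suc i'. 1 - q ^ (j + 1)))"
      by (simp add: prod.lessThan_Suc algebra_simps)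
    also have "\<dots> = (\<Prod>j<i'. 1 - q ^ (k - j)) * ((1 - q ^ Suc i') + q ^ Suc i' * (1 - q ^ (k - i')))"
      unfolding Suc.IH by (simp add: prod.lessThan_Suc algebra_simps)
    also have "\<dots> = (\<Prod>j<Suc i'. 1 - q ^ (Suc k - j))"
    proof (cases "i' \<le> k")
      case True
      then have "Suc i' + (k - i') = Suc k" by simp
      then have pow: "q ^ Suc i' * q ^ (k - i') = q ^ Suc k" by (metis power_add)
      have shift: "(\<Prod>j<Suc i'. 1 - q ^ (Suc k - j)) = (1 - q ^ Suc k) * (\<Prod>j<i'. 1 - q ^ (k - j))"
        by (simp only: prod.lessThan_Suc_shift diff_Suc_Suc diff_zero)
      have ring: "1 - a + a * (1 - b) = 1 - a * b" for a b :: 'a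
        by (simp add: algebra_simps)
      show ?thesis unfolding shift ring pow by (simp add: mult.commute)
    next
      case False
      have "(\<Prod>j<i'. 1 - q ^ (k - j)) = 0"
        using False by (intro prod_zero) (auto intro!: bexI[of _ k])
      moreover have "(\<Prod>j<Suc i'. 1 - q ^ (Suc k - j)) = 0"
        using False by (intro prod_zero) (auto intro!: bexI[of _ "Suc k"])
      ultimately show ?thesis by simp
    qed
    finally show ?thesis using Suc by simp
  qed
qed

lemma qbinom_coeff_root_of_unity:
  fixes q :: "'a::field"
  assumes "primitive_root N q" "0 < i" "i < N"
  shows "qbinom_coeff q N i = 0"
proof -
  have "(\<Prod>j<i. 1 - q ^ (N - j)) = 0"
    using assms by (intro prod_zero) (auto simp: primitive_root_def intro!: bexI[of _ 0])
  moreover have "(\<Prod>j<i. 1 - q ^ (j + 1)) \<noteq> 0"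
  proof -
    have "q ^ (j + 1) \<noteq> 1" if "j < i" for j
      using assms(1,3) that unfolding primitive_root_def by (metis add_gr_0 less_trans_Suc
          Suc_eq_plus1 zero_less_one)
    then show ?thesis by (simp add: prod_zero_iff del: power_Suc)
  qed
  ultimately show ?thesis
    using qbinom_coeff_mult_prod[of q N i] by (metis mult_eq_0_iff)
qed

context basis_algebra
begin

lemma vpow_add_qcommuting:
  assumes "supported_on B X" "supported_on B Y" and YX: "vmul B m Y X = vscale q (vmul B m X Y)"
  shows "vpow B m e (X + Y) k
       = (\<Sum>i\<le>k. vscale (qbinom_coeff q k i) (vmul B m (vpow B m e X i) (vpow B m e Y (k - i))))"
proof (induction k)
  case 0
  then show ?case by (simp add: vpow_0 vmul_unit_left supported_unit)
next
  case (Suc k)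
  define F where "F i = vmul B m (vpow B m e X i) (vpow B m e Y (k - i))" for i
  define G where "G i = vscale (qbinom_coeff q k i * q ^ i)
      (vmul B m (vpow B m e X i) (vpow B m e Y (Suc k - i)))" for i
  have XF: "vmul B m X (F i) = vmul B m (vpow B m e X (Suc i)) (vpow B m e Y (k - i))" for i
    by (simp add: F_def vpow_Suc vmul_assoc)
  have YF: "vscale (qbinom_coeff q k i) (vmul B m Y (F i)) = G i" if "i \<le> k" for i
  proof -
    have "vmul B m Y (F i)
        = vscale (q ^ i) (vmul B m (vpow B m e X i) (vmul B m Y (vpow B m e Y (k - i))))"
      by (simp add: F_def vmul_assoc[symmetric] qcommute_vpow[OF assms(2) YX] vmul_vscale_left)
    also have "vmul B m Y (vpow B m e Y (k - i)) = vpow B m e Y (Suc k - i)"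
      using that by (simp add: vpow_Suc Suc_diff_le)
    finally show ?thesis by (simp add: G_def mult.commute)
  qed
  have "vpow B m e (X + Y) (Suc k)
      = (\<Sum>i\<le>k. vscale (qbinom_coeff q k i) (vmul B m X (F i)))
        + (\<Sum>i\<le>k. vscale (qbinom_coeff q k i) (vmul B m Y (F i)))"
    by (simp add: vpow_Suc Suc.IH F_def vmul_add_left vmul_sum_right vmul_vscale_right
        sum.distrib vscale_add_right)
  also have "(\<Sum>i\<le>k. vscale (qbinom_coeff q k i) (vmul B m Y (F i))) = (\<Sum>i\<le>Suc k. G i)"
    by (simp add: YF G_def qbinom_coeff_eq_0)
  also have "\<dots> = G 0 + (\<Sum>i\<le>k. G (Suc i))"
    by (rule sum.atMost_Suc_shift)
  also have "(\<Sum>i\<le>k. vscale (qbinom_coeff q k i) (vmul B m X (F i))) + (G 0 + (\<Sum>i\<le>k. G (Suc i)))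
      = vscale (qbinom_coeff q (Suc k) 0) (vmul B m (vpow B m e X 0) (vpow B m e Y (Suc k - 0)))
        + (\<Sum>i\<le>k. vscale (qbinom_coeff q (Suc k) (Suc i))
             (vmul B m (vpow B m e X (Suc i)) (vpow B m e Y (Suc k - Suc i))))"
    by (simp add: G_def XF vscale_add_left sum.distrib mult.commute algebra_simps)
  also have "\<dots> = (\<Sum>i\<le>Suc k. vscale (qbinom_coeff q (Suc k) i)
      (vmul B m (vpow B m e X i) (vpow B m e Y (Suc k - i))))"
    by (rule sum.atMost_Suc_shift[symmetric])
  finally show ?case .
qed

lemma vpow_add_eq_0:
  assumes "supported_on B X" "supported_on B Y" "vmul B m Y X = vscale q (vmul B m X Y)"
    and "primitive_root N q" "vpow B m e X N = 0" "vpow B m e Y N = 0"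
  shows "vpow B m e (X + Y) N = 0"
  unfolding vpow_add_qcommuting[OF assms(1-3)]
proof (rule sum.neutral, intro ballI)
  fix i assume "i \<in> {..N}"
  then consider "i = 0" | "i = N" | "0 < i" "i < N" by fastforce
  then show "vscale (qbinom_coeff q N i) (vmul B m (vpow B m e X i) (vpow B m e Y (N - i))) = 0"
    by cases (simp_all add: assms(5,6) vmul_zero_left vmul_zero_right
        qbinom_coeff_root_of_unity[OF assms(4)])
qed

definition poly_eval :: "('b \<Rightarrow> 'k) \<Rightarrow> 'k poly \<Rightarrow> 'b \<Rightarrow> 'k" where
  "poly_eval X p = fold_coeffs (\<lambda>a r. vscale a (vunit e) + vmul B m X r) p 0"

lemma poly_eval_0 [simp]: "poly_eval X 0 = 0"
  by (simp add: poly_eval_def)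

lemma poly_eval_pCons: "poly_eval X (pCons a p) = vscale a (vunit e) + vmul B m X (poly_eval X p)"
  by (cases "p = 0"; cases "a = 0")
    (simp_all add: poly_eval_def vmul_zero_right fold_coeffs_pCons_coeff_not_0_eq
      fold_coeffs_pCons_not_0_0_eq)

lemma supported_poly_eval: "supported_on B (poly_eval X p)"
  by (induction p) (simp_all add: poly_eval_pCons supported_on_zero supported_on_add
      supported_on_vscale supported_unit supported_vmul)

lemma poly_eval_add: "poly_eval X (p + q) = poly_eval X p + poly_eval X q"
proof (induction p arbitrary: q)
  case (pCons a p)
  show ?case
  proof (cases q rule: pCons_cases)
    case (pCons b q')
    then show ?thesis
      using pCons.IH[of q'] by (simp add: poly_eval_pCons vscale_add_left vmul_add_right algebra_simps)
  qed
qed simp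

lemma poly_eval_diff: "poly_eval X (p - q) = poly_eval X p - poly_eval X q"
  using poly_eval_add[of X "p - q" q] by (simp add: algebra_simps)

lemma poly_eval_smult: "poly_eval X (smult c p) = vscale c (poly_eval X p)"
  by (induction p) (simp_all add: poly_eval_pCons vscale_add_right vmul_vscale_right mult.commute)

lemma poly_eval_mult: "poly_eval X (p * q) = vmul B m (poly_eval X p) (poly_eval X q)"
  by (induction p) (simp_all add: vmul_zero_left poly_eval_pCons poly_eval_add poly_eval_smult
      vmul_add_left vmul_vscale_left vmul_unit_left supported_poly_eval vmul_assoc)

lemma poly_eval_1: "poly_eval X 1 = vunit e"
  by (simp add: one_pCons poly_eval_pCons vmul_zero_right)

lemma poly_eval_linear: "supported_on B X \<Longrightarrow> poly_eval X [:a, c:] = vscale a (vunit e) + vscale c X"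
  by (simp add: poly_eval_pCons vmul_vscale_right vmul_unit_right vmul_zero_right vmul_add_right)

lemma poly_eval_monom: "poly_eval X (monom 1 k) = vpow B m e X k"
  by (induction k) (simp_all add: vpow_0 vpow_Suc poly_eval_1 monom_Suc poly_eval_pCons
      flip: one_poly_def)

lemma qcommute_poly_eval:
  assumes "supported_on B X" "supported_on B Y" and YX: "vmul B m Y X = vscale q (vmul B m X Y)"
  shows "vmul B m Y (poly_eval X p) = vmul B m (poly_eval X (pcompose p [:0, q:])) Y"
proof (induction p)
  case 0
  then show ?case by (simp add: vmul_zero_right vmul_zero_left)
next
  case (pCons a p)
  have "vmul B m Y (poly_eval X (pCons a p))
      = vscale a Y + vscale q (vmul B m X (vmul B m Y (poly_eval X p)))"
    by (simp add: poly_eval_pCons vmul_add_right vmul_vscale_right vmul_unit_right assms(2)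
        vmul_assoc[symmetric] YX vmul_vscale_left)
  also have "\<dots> = vmul B m (poly_eval X (pcompose (pCons a p) [:0, q:])) Y"
    using pCons.IH
    by (simp add: pcompose_pCons poly_eval_add poly_eval_mult poly_eval_linear[OF assms(1)]
        poly_eval_pCons poly_eval_smult vmul_add_left vmul_vscale_left vmul_vscale_right
        vmul_unit_left assms(2) vmul_assoc)
  finally show ?case .
qed

end

lemma lin_as_sum: "lin B f v = (\<Sum>p\<in>B. vscale (v p) (f p))"
  by (rule ext) (simp add: lin_def sum_fun_apply vscale_apply)
lemma lin_add: "lin B f (v + w) = lin B f v + lin B f w"
  by (rule ext) (simp add: fun_arith_apply lin_def algebra_simps sum.distrib)
lemma lin_diff: "lin B f (v - w) = lin B f v - lin B f w"
  by (rule ext) (simp add: fun_arith_apply lin_def algebra_simps sum_subtractf)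
lemma lin_vscale: "lin B f (vscale c v) = vscale c (lin B f v)"
  by (rule ext) (simp add: lin_def sum_distrib_left vscale_apply algebra_simps)
lemma lin_zero: "lin B f 0 = 0"
  by (rule ext) (simp add: fun_arith_apply lin_def)
lemma lin_sum: "lin B f (\<Sum>i\<in>I. g i) = (\<Sum>i\<in>I. lin B f (g i))"
  by (induction I rule: infinite_finite_induct) (simp_all add: lin_zero lin_add)
lemma lin_vunit: "finite B \<Longrightarrow> p \<in> B \<Longrightarrow> lin B f (vunit p) = f p"
  by (rule ext) (simp add: lin_def sum_vunit_mult vunit_sym[of _ p])

lemma lin_cong: "(\<And>p. p \<in> B \<Longrightarrow> f p = g p) \<Longrightarrow> lin B f v = lin B g v"
  by (rule ext) (simp add: lin_def)

lemma lin_lin: "lin B f (lin C g a) = lin C (\<lambda>k. lin B f (g k)) a"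
  by (simp add: lin_as_sum[of C] lin_sum lin_vscale)

lemma supported_lin: "(\<And>p. p \<in> B \<Longrightarrow> supported_on C (f p)) \<Longrightarrow> supported_on C (lin B f v)"
  unfolding lin_as_sum by (intro supported_on_sum supported_on_vscale) auto

lemma lin_vmul:
  assumes "finite B" and "\<And>p q. p \<in> B \<Longrightarrow> q \<in> B \<Longrightarrow> snd (m p q) \<in> B"
    and "\<And>p q. p \<in> B \<Longrightarrow> q \<in> B \<Longrightarrow> vscale (fst (m p q)) (f (snd (m p q))) = vmul B' m' (f p) (f q)"
  shows "lin B f (vmul B m v w) = vmul B' m' (lin B f v) (lin B f w)"
proof -
  have "lin B f (vmul B m v w) = lin B f (vmul B m (basis_expansion B v) (basis_expansion B w))"
    using vmul_basis_expansion[OF assms(1)] by metis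
  also have "\<dots> = (\<Sum>q\<in>B. vscale (w q) (\<Sum>p\<in>B. vscale (v p) (vmul B' m' (f p) (f q))))"
    unfolding basis_expansion_def vmul_sum_left vmul_sum_right vmul_vscale_left vmul_vscale_right
      lin_sum lin_vscale
    by (intro sum.cong refl) (simp add: vmul_vunit lin_vscale lin_vunit assms)
  also have "\<dots> = vmul B' m' (lin B f v) (lin B f w)"
    unfolding lin_as_sum[of B] vmul_sum_left vmul_sum_right vmul_vscale_left vmul_vscale_right ..
  finally show ?thesis .
qed

lemma tensor_bm_apply:
  "tensor_bm m1 m2 (p1, p2) (q1, q2) = (fst (m1 p1 q1) * fst (m2 p2 q2), (snd (m1 p1 q1), snd (m2 p2 q2)))"
  by (simp add: tensor_bm_def)

lemma vtensor_apply: "vtensor v w (p, q) = v p * w q"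
  by (simp add: vtensor_def)

lemma vtensor_mul:
  "vmul (B1 \<times> B2) (tensor_bm m1 m2) (vtensor v1 v2) (vtensor w1 w2)
     = vtensor (vmul B1 m1 v1 w1) (vmul B2 m2 v2 w2)"
proof (rule ext, clarify)
  fix b1 b2
  define I1 where "I1 p q = (if snd (m1 p q) = b1 then fst (m1 p q) else 0)" for p q
  define I2 where "I2 p q = (if snd (m2 p q) = b2 then fst (m2 p q) else 0)" for p q
  have "vmul (B1 \<times> B2) (tensor_bm m1 m2) (vtensor v1 v2) (vtensor w1 w2) (b1, b2)
     = (\<Sum>p1\<in>B1. \<Sum>p2\<in>B2. \<Sum>q1\<in>B1. \<Sum>q2\<in>B2.
          (v1 p1 * w1 q1 * I1 p1 q1) * (v2 p2 * w2 q2 * I2 p2 q2))"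
    unfolding vmul_expand sum.cartesian_product'
    by (intro sum.cong refl) (simp add: vtensor_def tensor_bm_def I1_def I2_def)
  also have "\<dots> = (\<Sum>p1\<in>B1. \<Sum>q1\<in>B1. \<Sum>p2\<in>B2. \<Sum>q2\<in>B2.
          (v1 p1 * w1 q1 * I1 p1 q1) * (v2 p2 * w2 q2 * I2 p2 q2))"
    by (intro sum.cong refl) (rule sum.swap)
  also have "\<dots> = (\<Sum>p1\<in>B1. \<Sum>q1\<in>B1. v1 p1 * w1 q1 * I1 p1 q1)
      * (\<Sum>p2\<in>B2. \<Sum>q2\<in>B2. v2 p2 * w2 q2 * I2 p2 q2)"
    by (simp only: sum_distrib_right, simp only: sum_distrib_left)
  also have "\<dots> = vtensor (vmul B1 m1 v1 w1) (vmul B2 m2 v2 w2) (b1, b2)"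
    by (simp add: vtensor_def vmul_expand I1_def I2_def)
  finally show "vmul (B1 \<times> B2) (tensor_bm m1 m2) (vtensor v1 v2) (vtensor w1 w2) (b1, b2)
      = vtensor (vmul B1 m1 v1 w1) (vmul B2 m2 v2 w2) (b1, b2)" .
qed

lemma vtensor_add_left: "vtensor (v + v') w = vtensor v w + vtensor v' w"
  by (rule ext) (auto simp: vtensor_def fun_arith_apply algebra_simps)
lemma vtensor_diff_right: "vtensor w (v - v') = vtensor w v - vtensor w v'"
  by (rule ext) (auto simp: vtensor_def fun_arith_apply algebra_simps)
lemma vtensor_vscale_left: "vtensor (vscale c v) w = vscale c (vtensor v w)"
  by (rule ext) (auto simp: vtensor_def vscale_apply algebra_simps)
lemma vtensor_vscale_right: "vtensor w (vscale c v) = vscale c (vtensor w v)"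
  by (rule ext) (auto simp: vtensor_def vscale_apply algebra_simps)
lemma vtensor_zero_left: "vtensor 0 w = 0"
  by (rule ext) (auto simp: vtensor_def fun_arith_apply)
lemma vtensor_zero_right: "vtensor w 0 = 0"
  by (rule ext) (auto simp: vtensor_def fun_arith_apply)
lemma vtensor_vunit: "vtensor (vunit p) (vunit q) = vunit (p, q)"
  by (rule ext) (auto simp: vtensor_def vunit_def split: if_splits)
lemma supported_vtensor:
  "supported_on B1 v \<Longrightarrow> supported_on B2 w \<Longrightarrow> supported_on (B1 \<times> B2) (vtensor (v :: _ \<Rightarrow> 'k::field) w)"
  by (auto simp: supported_on_def vtensor_def)

lemma basis_algebra_tensor:
  assumes "basis_algebra B1 m1 e1" "basis_algebra B2 m2 e2"
  shows "basis_algebra (B1 \<times> B2) (tensor_bm m1 m2) (e1, e2)"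
proof -
  interpret A1: basis_algebra B1 m1 e1 by fact
  interpret A2: basis_algebra B2 m2 e2 by fact
  show ?thesis
  proof
    fix p q s assume "p \<in> B1 \<times> B2" "q \<in> B1 \<times> B2" "s \<in> B1 \<times> B2"
    then obtain p1 p2 q1 q2 s1 s2 where P: "p = (p1, p2)" "q = (q1, q2)" "s = (s1, s2)"
      and M: "p1 \<in> B1" "q1 \<in> B1" "s1 \<in> B1" "p2 \<in> B2" "q2 \<in> B2" "s2 \<in> B2" by auto
    let ?m = "tensor_bm m1 m2"
    have "fst (?m p q) * fst (?m (snd (?m p q)) s)
        = (fst (m1 p1 q1) * fst (m1 (snd (m1 p1 q1)) s1)) * (fst (m2 p2 q2) * fst (m2 (snd (m2 p2 q2)) s2))"
      and "fst (?m q s) * fst (?m p (snd (?m q s)))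
        = (fst (m1 q1 s1) * fst (m1 p1 (snd (m1 q1 s1)))) * (fst (m2 q2 s2) * fst (m2 p2 (snd (m2 q2 s2))))"
      and "snd (?m (snd (?m p q)) s) = (snd (m1 (snd (m1 p1 q1)) s1), snd (m2 (snd (m2 p2 q2)) s2))"
      and "snd (?m p (snd (?m q s))) = (snd (m1 p1 (snd (m1 q1 s1))), snd (m2 p2 (snd (m2 q2 s2))))"
      unfolding P by (simp_all add: tensor_bm_def mult_ac)
    then show "fst (?m p q) * fst (?m (snd (?m p q)) s) = fst (?m q s) * fst (?m p (snd (?m q s))) \<and>
        (fst (?m p q) * fst (?m (snd (?m p q)) s) \<noteq> 0 \<longrightarrow>
         snd (?m (snd (?m p q)) s) = snd (?m p (snd (?m q s))))"
      using A1.basis_mult_assoc[OF M(1-3)] A2.basis_mult_assoc[OF M(4-6)] by auto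
  qed (use A1.finite_basis A2.finite_basis A1.unit_in_basis A2.unit_in_basis A1.mult_closed
      A2.mult_closed A1.unit_mult A2.unit_mult A1.mult_unit A2.mult_unit
      in \<open>auto simp: tensor_bm_def\<close>)
qed

lemma vpow_tensor:
  "vpow (B1 \<times> B2) (tensor_bm m1 m2) (e1, e2) (vtensor v w) k
     = vtensor (vpow B1 m1 e1 v k) (vpow B2 m2 e2 w k)"
  by (induction k) (simp_all add: vpow_def vtensor_vunit vtensor_mul)

definition reassoc :: "(('a \<times> 'b) \<times> 'c \<Rightarrow> 'k) \<Rightarrow> ('a \<times> ('b \<times> 'c) \<Rightarrow> 'k)" where
  "reassoc X = (\<lambda>(p1, (p2, l)). X ((p1, p2), l))"

lemma reassoc_apply: "reassoc X (a, (b, c)) = X ((a, b), c)"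
  by (simp add: reassoc_def)

lemma reassoc_mul:
  "vmul (B1 \<times> (B2 \<times> B3)) (tensor_bm m1 (tensor_bm m2 m3)) (reassoc X) (reassoc Y)
   = reassoc (vmul ((B1 \<times> B2) \<times> B3) (tensor_bm (tensor_bm m1 m2) m3) X Y)"
  by (rule ext, clarify)
    (simp add: vmul_expand sum.cartesian_product' reassoc_apply tensor_bm_def mult.assoc
      cong: if_cong)

lemma reassoc_add: "reassoc (X + Y) = reassoc X + reassoc Y"
  by (rule ext, clarify) (simp add: reassoc_apply fun_arith_apply)
lemma reassoc_vscale: "reassoc (vscale c X) = vscale c (reassoc X)"
  by (rule ext, clarify) (simp add: reassoc_apply vscale_apply)
lemma reassoc_tensor: "reassoc (vtensor (vtensor a b) c) = vtensor a (vtensor b c)"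
  by (rule ext, clarify) (simp add: reassoc_apply vtensor_apply mult.assoc)
lemma reassoc_vunit: "reassoc (vunit ((a, b), c)) = vunit (a, (b, c))"
  by (rule ext, clarify) (auto simp: reassoc_apply vunit_def)
lemma supported_reassoc:
  "supported_on ((A \<times> B) \<times> C) X \<Longrightarrow> supported_on (A \<times> (B \<times> C)) (reassoc X)"
  by (auto simp: supported_on_def reassoc_def)

subsection \<open>A polynomial identity at a primitive root of unity\<close>

lemma primitive_root_nonzero: "primitive_root n \<omega> \<Longrightarrow> (\<omega> :: 'k::field) \<noteq> 0"
  by (auto simp: primitive_root_def power_0_left)

lemma inj_on_root_powers:
  fixes \<omega> :: "'k::field"
  assumes "primitive_root n \<omega>"
  shows "inj_on (\<lambda>i. \<omega> ^ i) {..<n}"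
proof -
  have "\<omega> ^ i \<noteq> \<omega> ^ j" if "i < j" "j < n" for i j
  proof
    assume "\<omega> ^ i = \<omega> ^ j"
    moreover have "\<omega> \<noteq> 0" using primitive_root_nonzero[OF assms] .
    ultimately have "\<omega> ^ (j - i) = 1"
      using that by (simp add: power_diff)
    then show False using assms that by (simp add: primitive_root_def)
  qed
  then show ?thesis
    by (intro inj_onI) (metis lessThan_iff linorder_neqE_nat)
qed

lemma poly_prod_one_minus_root_powers_root:
  fixes \<omega> :: "'k::field"
  assumes "\<omega> ^ n = 1" "i < n"
  shows "poly (\<Prod>j<n. [:1, - (\<omega> ^ j):]) (\<omega> ^ i) = 0"
proof -
  text \<open>The factor with \<open>\<omega>^j = \<omega>^-i\<close> vanishes.\<close>
  define j where "j = (n - i) mod n"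
  have "j < n" using assms(2) by (simp add: j_def)
  have "\<omega> ^ j * \<omega> ^ i = 1"
  proof (cases "i = 0")
    case False
    then have "j + i = n" using assms(2) by (simp add: j_def)
    then show ?thesis using assms(1) by (metis power_add)
  qed (simp add: j_def)
  then show ?thesis
    using \<open>j < n\<close> by (auto simp: poly_prod prod_zero_iff mult.commute intro!: bexI[of _ j])
qed

lemma prod_one_minus_root_powers:
  fixes \<omega> :: "'k::field"
  assumes prim: "primitive_root n \<omega>"
  shows "(\<Prod>j<n. [:1, - (\<omega> ^ j):]) = 1 - monom 1 n"
proof (rule poly_eqI_degree)
  let ?roots = "insert 0 ((\<lambda>i. \<omega> ^ i) ` {..<n})"
  have \<omega>: "\<omega> \<noteq> 0" "\<omega> ^ n = 1" "0 < n"
    using prim primitive_root_nonzero[OF prim] by (auto simp: primitive_root_def)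
  have "0 \<notin> (\<lambda>i. \<omega> ^ i) ` {..<n}" using \<omega>(1) by auto
  then have "card ?roots = Suc n" using inj_on_root_powers[OF prim] by (simp add: card_image)
  moreover have "degree (\<Prod>j<n. [:1, - (\<omega> ^ j):]) \<le> (\<Sum>j<n. degree [:1, - (\<omega> ^ j):])"
    using degree_prod_sum_le[of "{..<n}" "\<lambda>j. [:1, - (\<omega> ^ j):]"] by (simp add: comp_def)
  moreover have "(\<Sum>j<n. degree [:1, - (\<omega> ^ j):]) \<le> n"
    using sum_mono[of "{..<n}" "\<lambda>j. degree [:1, - (\<omega> ^ j):]" "\<lambda>_. 1"] by simp
  moreover have "degree (1 - monom 1 n :: 'k poly) \<le> n"
    by (intro degree_diff_le) (simp_all add: degree_monom_le)
  ultimately show "degree (\<Prod>j<n. [:1, - (\<omega> ^ j):]) < card ?roots"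
    and "degree (1 - monom 1 n :: 'k poly) < card ?roots" by simp_all
  fix x assume "x \<in> ?roots"
  then consider "x = 0" | i where "i < n" "x = \<omega> ^ i" by auto
  then show "poly (\<Prod>j<n. [:1, - (\<omega> ^ j):]) x = poly (1 - monom 1 n) x"
  proof cases
    case 1
    then show ?thesis using \<omega>(3) by (simp add: poly_prod poly_monom)
  next
    case (2 i)
    moreover have "(\<omega> ^ i) ^ n = 1"
      using \<omega>(2) by (metis mult.commute power_mult power_one)
    ultimately show ?thesis
      by (simp add: poly_prod_one_minus_root_powers_root[OF \<omega>(2)] poly_monom)
  qed
qed

lemma power_mod_period: "(w :: 'a::monoid_mult) ^ n = 1 \<Longrightarrow> w ^ k = w ^ (k mod n)"
  by (metis div_mult_mod_eq mult.commute power_add power_mult power_one mult_1)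

lemma triangle_Suc: "i * (i - 1) div 2 + i = Suc i * i div 2"
proof -
  have "Suc i * i = i * (i - 1) + 2 * i" by (cases i) (simp_all add: algebra_simps)
  then show ?thesis by simp
qed

locale taft_setting =
  fixes n :: nat and \<omega> :: "'k::field"
  assumes two_le_n: "2 \<le> n" and omega_pow_n: "\<omega> ^ n = 1"
begin

lemma n_pos: "0 < n"
  using two_le_n by simp

lemma omega_nonzero: "\<omega> \<noteq> 0"
  using omega_pow_n n_pos by (auto simp: power_0_left)

lemma inverse_omega_pow_mod: "inverse \<omega> ^ k = inverse \<omega> ^ (k mod n)"
  by (rule power_mod_period) (simp add: omega_pow_n power_inverse)

lemma basis_algebra_taft: "basis_algebra (taft_basis n) (taft_bm n \<omega>) (0, 0)"
proof
  fix p q s assume "p \<in> taft_basis n" "q \<in> taft_basis n" "s \<in> taft_basis n"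
  then obtain i j k l a b where P: "p = (i, j)" "q = (k, l)" "s = (a, b)"
    and "i < n" "j < n" "k < n" "l < n" "a < n" "b < n" by (auto simp: taft_basis_def)
  have "inverse \<omega> ^ (((j + l) mod n) * a) = inverse \<omega> ^ ((j + l) * a)"
    by (subst (1 2) inverse_omega_pow_mod) (simp add: mod_mult_left_eq)
  then have "inverse \<omega> ^ (j * k) * inverse \<omega> ^ (((j + l) mod n) * a)
      = inverse \<omega> ^ (l * a) * inverse \<omega> ^ (j * (k + a))"
    by (simp add: power_add[symmetric] algebra_simps)
  moreover have "(((j + l) mod n) + b) mod n = (j + (l + b) mod n) mod n"
    by (simp add: mod_add_left_eq mod_add_right_eq add.assoc)
  ultimately show "fst (taft_bm n \<omega> p q) * fst (taft_bm n \<omega> (snd (taft_bm n \<omega> p q)) s) =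
        fst (taft_bm n \<omega> q s) * fst (taft_bm n \<omega> p (snd (taft_bm n \<omega> q s))) \<and>
        (fst (taft_bm n \<omega> p q) * fst (taft_bm n \<omega> (snd (taft_bm n \<omega> p q)) s) \<noteq> 0 \<longrightarrow>
         snd (taft_bm n \<omega> (snd (taft_bm n \<omega> p q)) s) = snd (taft_bm n \<omega> p (snd (taft_bm n \<omega> q s))))"
    unfolding P by (auto simp: taft_bm_def add.assoc)
qed (use n_pos in \<open>auto simp: taft_basis_def taft_bm_def\<close>)

lemma basis_algebra_A: "basis_algebra (A_basis n) (A_bm n \<omega>) 0"
proof
  fix k l s assume "k \<in> A_basis n" "l \<in> A_basis n" "s \<in> A_basis n"
  then have "k < n" "l < n" "s < n" by (auto simp: A_basis_def)
  then have "(if k + l < n then 1 else \<omega>) * (if (k + l) mod n + s < n then 1 else \<omega>) =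
        (if l + s < n then 1 else \<omega>) * (if k + (l + s) mod n < n then 1 else \<omega>)"
    by (cases "k + l < n"; cases "l + s < n") (auto simp: le_mod_geq)
  moreover have "((k + l) mod n + s) mod n = (k + (l + s) mod n) mod n"
    by (simp add: mod_add_left_eq mod_add_right_eq add.assoc)
  ultimately show "fst (A_bm n \<omega> k l) * fst (A_bm n \<omega> (snd (A_bm n \<omega> k l)) s) =
        fst (A_bm n \<omega> l s) * fst (A_bm n \<omega> k (snd (A_bm n \<omega> l s))) \<and>
        (fst (A_bm n \<omega> k l) * fst (A_bm n \<omega> (snd (A_bm n \<omega> k l)) s) \<noteq> 0 \<longrightarrow>
         snd (A_bm n \<omega> (snd (A_bm n \<omega> k l)) s) = snd (A_bm n \<omega> k (snd (A_bm n \<omega> l s))))"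
    by (simp add: A_bm_def)
qed (use n_pos in \<open>auto simp: A_basis_def A_bm_def\<close>)

abbreviation "HB \<equiv> taft_basis n"
abbreviation "Hm \<equiv> taft_bm n \<omega>"
abbreviation "AB \<equiv> A_basis n"
abbreviation "Am \<equiv> A_bm n \<omega>"

sublocale H: basis_algebra HB Hm "(0, 0)"
  by (rule basis_algebra_taft)
sublocale A: basis_algebra AB Am 0
  by (rule basis_algebra_A)
sublocale HA: basis_algebra "HB \<times> AB" "tensor_bm Hm Am" "((0, 0), 0)"
  by (rule basis_algebra_tensor[OF basis_algebra_taft basis_algebra_A])
sublocale HH: basis_algebra "HB \<times> HB" "tensor_bm Hm Hm" "((0, 0), (0, 0))"
  by (rule basis_algebra_tensor[OF basis_algebra_taft basis_algebra_taft])
sublocale HHA: basis_algebra "HB \<times> (HB \<times> AB)" "tensor_bm Hm (tensor_bm Hm Am)" "((0, 0), ((0, 0), 0))"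
  by (rule basis_algebra_tensor[OF basis_algebra_taft basis_algebra_tensor[OF basis_algebra_taft basis_algebra_A]])

abbreviation "H_mul \<equiv> vmul HB Hm"
abbreviation "H_pow \<equiv> vpow HB Hm (0, 0)"
abbreviation "A_pow \<equiv> vpow AB Am 0"
abbreviation "HA_mul \<equiv> vmul (HB \<times> AB) (tensor_bm Hm Am)"
abbreviation "HA_pow \<equiv> vpow (HB \<times> AB) (tensor_bm Hm Am) ((0, 0), 0)"
abbreviation "HH_mul \<equiv> vmul (HB \<times> HB) (tensor_bm Hm Hm)"
abbreviation "HH_pow \<equiv> vpow (HB \<times> HB) (tensor_bm Hm Hm) ((0, 0), (0, 0))"
abbreviation "HHA_mul \<equiv> vmul (HB \<times> (HB \<times> AB)) (tensor_bm Hm (tensor_bm Hm Am))"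
abbreviation "HHA_pow \<equiv> vpow (HB \<times> (HB \<times> AB)) (tensor_bm Hm (tensor_bm Hm Am)) ((0, 0), ((0, 0), 0))"
abbreviation "Delta_x \<equiv> taft_Delta_x :: (nat \<times> nat) \<times> (nat \<times> nat) \<Rightarrow> 'k"
abbreviation "Delta_g \<equiv> taft_Delta_g :: (nat \<times> nat) \<times> (nat \<times> nat) \<Rightarrow> 'k"
abbreviation "one_H \<equiv> vunit (0, 0) :: nat \<times> nat \<Rightarrow> 'k"
abbreviation "one_HA \<equiv> vunit ((0, 0), 0) :: (nat \<times> nat) \<times> nat \<Rightarrow> 'k"
abbreviation "one_HHA \<equiv> vunit ((0, 0), ((0, 0), 0)) :: (nat \<times> nat) \<times> ((nat \<times> nat) \<times> nat) \<Rightarrow> 'k"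

lemma mem_taft_basis [simp]: "(i, j) \<in> HB \<longleftrightarrow> i < n \<and> j < n"
  by (simp add: taft_basis_def)
lemma mem_A_basis [simp]: "k \<in> AB \<longleftrightarrow> k < n"
  by (simp add: A_basis_def)

lemma H_mul_vunit:
  "i < n \<Longrightarrow> j < n \<Longrightarrow> k < n \<Longrightarrow> l < n \<Longrightarrow> H_mul (vunit (i, j)) (vunit (k, l))
     = (if i + k < n then vscale (inverse \<omega> ^ (j * k)) (vunit (i + k, (j + l) mod n)) else 0)"
  by (simp add: vmul_vunit H.finite_basis taft_bm_def)

lemma A_mul_vunit:
  "k < n \<Longrightarrow> l < n \<Longrightarrow> vmul AB Am (vunit k) (vunit l)
     = vscale (if k + l < n then 1 else \<omega>) (vunit ((k + l) mod n))"
  by (simp add: vmul_vunit A.finite_basis A_bm_def)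

lemma HA_mul_vunit:
  "i < n \<Longrightarrow> j < n \<Longrightarrow> k < n \<Longrightarrow> i' < n \<Longrightarrow> j' < n \<Longrightarrow> k' < n \<Longrightarrow>
   HA_mul (vunit ((i, j), k)) (vunit ((i', j'), k')) =
   (if i + i' < n then vscale (inverse \<omega> ^ (j * i') * (if k + k' < n then 1 else \<omega>))
       (vunit ((i + i', (j + j') mod n), (k + k') mod n)) else 0)"
  by (simp add: vmul_vunit HA.finite_basis tensor_bm_def taft_bm_def A_bm_def)

lemma x_pow: "i < n \<Longrightarrow> H_pow taft_x i = vunit (i, 0)"
  using two_le_n by (induction i) (simp_all add: H.vpow_0 H.vpow_Suc taft_x_def H_mul_vunit)

lemma x_pow_n: "H_pow taft_x n = 0"
proof -
  obtain k where k: "n = Suc k" using n_pos by (cases n) auto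
  then have "k < n" "\<not> 1 + k < n" "1 < n" using two_le_n by simp_all
  have "H_pow taft_x n = H_mul taft_x (H_pow taft_x k)"
    using k H.vpow_Suc by simp
  then show ?thesis
    using \<open>k < n\<close> \<open>\<not> 1 + k < n\<close> \<open>1 < n\<close>
    by (simp only: x_pow[OF \<open>k < n\<close>]) (simp add: taft_x_def H_mul_vunit)
qed

lemma g_pow: "H_pow taft_g j = vunit (0, j mod n)"
  using two_le_n by (induction j) (simp_all add: H.vpow_0 H.vpow_Suc taft_g_def H_mul_vunit mod_Suc_eq)

lemma u_pow: "k < n \<Longrightarrow> A_pow A_u k = vunit k"
  using two_le_n by (induction k) (simp_all add: A.vpow_0 A.vpow_Suc A_u_def A_mul_vunit)

lemma u_pow_n: "A_pow A_u n = vscale \<omega> (vunit 0)"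
proof -
  obtain k where k: "n = Suc k" using n_pos by (cases n) auto
  then have "k < n" "\<not> 1 + k < n" "1 < n" "(1 + k) mod n = 0" using two_le_n by simp_all
  have "A_pow A_u n = vmul AB Am A_u (A_pow A_u k)"
    using k A.vpow_Suc by simp
  then show ?thesis
    using \<open>k < n\<close> \<open>\<not> 1 + k < n\<close> \<open>1 < n\<close> \<open>(1 + k) mod n = 0\<close>
    by (simp only: u_pow[OF \<open>k < n\<close>]) (simp add: A_u_def A_mul_vunit)
qed

text \<open>\<open>g^-1 = g^n'\<close>; \<open>n' = n - 1\<close> is a constant so that the simplifier leaves the truncated
  subtraction alone.\<close>

definition n' :: nat where "n' = n - 1"

lemma Suc_n': "Suc n' = n"
  using n_pos by (simp add: n'_def)
lemma n'_less [simp]: "n' < n"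
  using n_pos by (simp add: n'_def)

lemma inverse_omega_pow_n'_mult: "inverse \<omega> ^ (n' * i) = \<omega> ^ i"
proof -
  have "n' * i + i = n * i"
    by (metis Suc_n' mult_Suc add.commute)
  then have "\<omega> ^ (n' * i) * \<omega> ^ i = (\<omega> ^ n) ^ i"
    by (metis power_add power_mult)
  then have "\<omega> ^ (n' * i) * \<omega> ^ i = 1"
    by (simp add: omega_pow_n)
  then show ?thesis
    using omega_nonzero by (simp add: power_inverse[symmetric] field_simps)
qed

lemma n'_mult_Suc_mod: "(n' + n' * k mod n) mod n = n' * Suc k mod n"
  by (metis mod_add_right_eq mult_Suc_right)

abbreviation "g_inv \<equiv> taft_ginv n \<omega>"

lemma g_inv_eq: "g_inv = vunit (0, n')"
  using n_pos by (simp add: taft_ginv_def g_pow n'_def)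

lemma g_inv_pow: "H_pow g_inv k = vunit (0, (n' * k) mod n)"
  using n_pos
  by (induction k) (simp_all add: H.vpow_0 H.vpow_Suc g_inv_eq H_mul_vunit n'_mult_Suc_mod)

definition coef_T :: 'k where "coef_T = \<omega> * (\<omega> - 1)"
definition x_ginv :: "nat \<times> nat \<Rightarrow> 'k" where "x_ginv = vunit (1, n')"
definition T_u :: "(nat \<times> nat) \<times> nat \<Rightarrow> 'k" where "T_u = vscale coef_T (vtensor x_ginv A_u)"
definition G_u :: "(nat \<times> nat) \<times> nat \<Rightarrow> 'k" where "G_u = vtensor g_inv A_u"

lemma T_u_eq: "T_u = vscale coef_T (vunit ((1, n'), 1))"
  by (simp add: T_u_def x_ginv_def A_u_def vtensor_vunit)
lemma G_u_eq: "G_u = vunit ((0, n'), 1)"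
  by (simp add: G_u_def g_inv_eq A_u_def vtensor_vunit)

lemma supported_T_u: "supported_on (HB \<times> AB) T_u"
  using two_le_n by (simp add: T_u_eq supported_on_vscale supported_on_vunit)
lemma supported_G_u: "supported_on (HB \<times> AB) G_u"
  using two_le_n by (simp add: G_u_eq supported_on_vunit)

lemma coef_a_eq: "coef_a \<omega> i = coef_T ^ i * \<omega> ^ (i * (i - 1) div 2)"
proof -
  have "i * (i + 1) div 2 = i * (i - 1) div 2 + i"
    using triangle_Suc[of i] by (simp add: mult.commute)
  then show ?thesis by (simp add: coef_a_def coef_T_def power_add power_mult_distrib mult_ac)
qed

lemma T_u_pow:
  "i < n \<Longrightarrow> HA_pow T_u i = vscale (coef_a \<omega> i) (vunit ((i, (n' * i) mod n), i))"
proof (induction i)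
  case 0
  then show ?case by (simp add: HA.vpow_0 coef_a_def)
next
  case (Suc i)
  have "HA_pow T_u (Suc i) = vscale (coef_T * coef_a \<omega> i)
      (HA_mul (vunit ((1, n'), 1)) (vunit ((i, (n' * i) mod n), i)))"
    using Suc by (simp add: HA.vpow_Suc T_u_eq vmul_vscale_left vmul_vscale_right mult.commute)
  also have "\<dots> = vscale (coef_T * coef_a \<omega> i * \<omega> ^ i) (vunit ((Suc i, n' * Suc i mod n), Suc i))"
    using Suc.prems n_pos by (simp add: HA_mul_vunit n'_mult_Suc_mod inverse_omega_pow_n'_mult)
  also have "coef_T * coef_a \<omega> i * \<omega> ^ i = coef_a \<omega> (Suc i)"
  proof -
    have "Suc i * (Suc i - 1) div 2 = i * (i - 1) div 2 + i"
      using triangle_Suc[of i] by simp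
    then show ?thesis by (simp only: coef_a_eq power_add power_Suc mult_ac)
  qed
  finally show ?case .
qed

lemma T_u_pow_n: "HA_pow T_u n = 0"
proof -
  obtain k where k: "n = Suc k" using n_pos by (cases n) auto
  then have "k < n" "\<not> 1 + k < n" "1 < n" "n' * k mod n < n" using two_le_n by simp_all
  then have "HA_mul (vunit ((1, n'), 1)) (vunit ((k, n' * k mod n), k)) = 0"
    by (subst HA_mul_vunit) simp_all
  moreover have "HA_pow T_u n = HA_mul T_u (vscale (coef_a \<omega> k) (vunit ((k, n' * k mod n), k)))"
    by (metis HA.vpow_Suc k T_u_pow[OF \<open>k < n\<close>])
  ultimately show ?thesis
    by (simp add: T_u_eq vmul_vscale_left vmul_vscale_right)
qed

lemma rho_u_summand:
  assumes "i < n"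
  shows "vtensor (H_mul (H_pow taft_x i) (H_pow g_inv (Suc i))) (A_pow A_u (Suc i))
       = vscale (if Suc i < n then 1 else \<omega>) (vunit ((i, n' * Suc i mod n), Suc i mod n))"
proof -
  have "H_mul (H_pow taft_x i) (H_pow g_inv (Suc i)) = vunit (i, n' * Suc i mod n)"
    using assms n_pos by (simp add: x_pow g_inv_pow H_mul_vunit)
  moreover have "A_pow A_u (Suc i) = vscale (if Suc i < n then 1 else \<omega>) (vunit (Suc i mod n))"
  proof (cases "Suc i < n")
    case False
    then have "Suc i = n" using assms by simp
    then show ?thesis by (simp add: u_pow_n)
  qed (simp add: u_pow)
  ultimately show ?thesis by (simp add: vtensor_vscale_right vtensor_vunit)
qed

lemma T_u_pow_mult_G_u: "i < n \<Longrightarrow> HA_mul (HA_pow T_u i) G_u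
  = vscale (coef_a \<omega> i * (if Suc i < n then 1 else \<omega>)) (vunit ((i, n' * Suc i mod n), Suc i mod n))"
  using n_pos two_le_n n'_mult_Suc_mod[of i]
  by (simp add: T_u_pow G_u_eq vmul_vscale_left HA_mul_vunit add.commute)

lemma rho_u_eq: "rho_u n \<omega> = (\<Sum>i<n. HA_mul (HA_pow T_u i) G_u)"
proof -
  have "rho_u n \<omega> = (\<Sum>i<n. vscale (coef_a \<omega> i)
      (vtensor (H_mul (H_pow taft_x i) (H_pow g_inv (Suc i))) (A_pow A_u (Suc i))))"
    unfolding rho_u_def by (rule ext) (simp add: sum_fun_apply vscale_apply)
  also have "\<dots> = (\<Sum>i<n. HA_mul (HA_pow T_u i) G_u)"
    by (intro sum.cong refl) (simp add: rho_u_summand T_u_pow_mult_G_u mult_ac)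
  finally show ?thesis .
qed

lemma supported_rho_u: "supported_on (HB \<times> AB) (rho_u n \<omega>)"
  unfolding rho_u_eq by (intro supported_on_sum HA.supported_vmul)

lemma one_minus_T_u_mult_rho_u: "HA_mul (one_HA - T_u) (rho_u n \<omega>) = G_u"
  unfolding rho_u_eq
  by (simp add: HA.one_minus_mult_geometric_sum[OF supported_G_u] T_u_pow_n vmul_zero_left)

lemma G_u_T_u: "HA_mul G_u T_u = vscale \<omega> (HA_mul T_u G_u)"
  using two_le_n inverse_omega_pow_n'_mult[of 1]
  by (simp add: G_u_eq T_u_eq vmul_vscale_left vmul_vscale_right HA_mul_vunit mult_ac)

text \<open>Commuting \<open>G\<close> past the product shifts each \<open>\<omega>^j\<close> to \<open>\<omega>^(j+1)\<close>, which frees the factor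
  \<open>1 - T\<close> needed to absorb one more \<open>\<rho>(u)\<close>.\<close>

lemma prod_factors_mult_rho_u_pow:
  "HA_mul (HA.poly_eval T_u (\<Prod>j<k. [:1, - (\<omega> ^ j):])) (HA_pow (rho_u n \<omega>) k) = HA_pow G_u k"
proof (induction k)
  case 0
  then show ?case by (simp add: HA.poly_eval_1 HA.vpow_0 HA.vmul_unit_left HA.supported_unit)
next
  case (Suc k)
  let ?P = "\<Prod>j<k. [:1, - (\<omega> ^ j):]" and ?P' = "\<Prod>j<k. [:1, - (\<omega> ^ Suc j):]"
  let ?R = "HA_pow (rho_u n \<omega>) k"
  have "(\<Prod>j<Suc k. [:1, - (\<omega> ^ j):]) = ?P' * [:1, - 1:]"
    by (simp only: prod.lessThan_Suc_shift power_0 mult.commute)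
  moreover have "HA.poly_eval T_u [:1, - 1:] = one_HA - T_u"
    by (rule ext) (simp add: HA.poly_eval_linear supported_T_u fun_arith_apply vscale_apply)
  moreover have "pcompose ?P [:0, \<omega>:] = ?P'"
    by (simp add: pcompose_prod pcompose_pCons mult.commute)
  ultimately have "HA_mul (HA.poly_eval T_u (\<Prod>j<Suc k. [:1, - (\<omega> ^ j):])) (HA_pow (rho_u n \<omega>) (Suc k))
      = HA_mul (HA.poly_eval T_u ?P') (HA_mul (HA_mul (one_HA - T_u) (rho_u n \<omega>)) ?R)"
    by (simp only: HA.poly_eval_mult HA.vpow_Suc HA.vmul_assoc)
  also have "\<dots> = HA_mul (HA_mul (HA.poly_eval T_u ?P') G_u) ?R"
    by (simp only: one_minus_T_u_mult_rho_u HA.vmul_assoc)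
  also have "\<dots> = HA_mul G_u (HA_mul (HA.poly_eval T_u ?P) ?R)"
    by (simp only: HA.vmul_assoc[symmetric] HA.qcommute_poly_eval[OF supported_T_u supported_G_u G_u_T_u]
        \<open>pcompose ?P [:0, \<omega>:] = ?P'\<close>)
  also have "\<dots> = HA_pow G_u (Suc k)"
    by (simp only: Suc.IH HA.vpow_Suc)
  finally show ?case .
qed

end

locale taft_primitive = taft_setting +
  assumes primitive: "primitive_root n \<omega>"
begin

lemma rho_u_pow_n: "HA_pow (rho_u n \<omega>) n = vscale \<omega> one_HA"
proof -
  have "HA.poly_eval T_u (\<Prod>j<n. [:1, - (\<omega> ^ j):]) = one_HA"
    by (simp add: prod_one_minus_root_powers[OF primitive] HA.poly_eval_diff HA.poly_eval_1
        HA.poly_eval_monom T_u_pow_n fun_arith_apply)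
  then have "HA_pow (rho_u n \<omega>) n = HA_pow G_u n"
    using prod_factors_mult_rho_u_pow[of n] by (simp add: HA.vmul_unit_left HA.supported_vpow)
  also have "\<dots> = vtensor (H_pow g_inv n) (A_pow A_u n)"
    by (simp add: G_u_def vpow_tensor)
  also have "\<dots> = vscale \<omega> one_HA"
    by (simp add: g_inv_pow u_pow_n vtensor_vscale_right vtensor_vunit)
  finally show ?thesis .
qed

lemma rho_eq: "rho n \<omega> = lin AB (HA_pow (rho_u n \<omega>))"
  by (simp add: rho_def HA_basis_def HA_bm_def)

lemma id_tensor_rho_eq:
  "id_tensor_rho n \<omega> = lin (HB \<times> AB) (\<lambda>(p, k). vtensor (vunit p) (HA_pow (rho_u n \<omega>) k))"
proof -
  have "rho n \<omega> (vunit k) = HA_pow (rho_u n \<omega>) k" if "k < n" for k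
    using that by (simp add: rho_eq lin_vunit A.finite_basis)
  then show ?thesis
    unfolding id_tensor_rho_def HA_basis_def by (intro ext lin_cong) auto
qed

text \<open>On basis elements \<open>h \<otimes> u^k\<close>, multiplicativity needs \<open>\<rho>(u)^n = \<omega>\<close> when the exponents
  wrap around.\<close>

lemma id_tensor_rho_mul:
  "id_tensor_rho n \<omega> (HA_mul v w) = HHA_mul (id_tensor_rho n \<omega> v) (id_tensor_rho n \<omega> w)"
  unfolding id_tensor_rho_eq
proof (rule lin_vmul[OF HA.finite_basis HA.mult_closed])
  let ?f = "\<lambda>(p, k). vtensor (vunit p) (HA_pow (rho_u n \<omega>) k)"
  fix p q assume "p \<in> HB \<times> AB" "q \<in> HB \<times> AB"
  then obtain p1 k q1 l where P: "p = (p1, k)" "q = (q1, l)"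
    and M: "p1 \<in> HB" "q1 \<in> HB" "k < n" "l < n" by auto
  have wrap: "vscale (fst (Am k l)) (HA_pow (rho_u n \<omega>) (snd (Am k l))) = HA_pow (rho_u n \<omega>) (k + l)"
  proof (cases "k + l < n")
    case False
    then have e: "k + l = n + (k + l - n)" "(k + l) mod n = k + l - n"
      using M by (simp_all add: le_mod_geq)
    have "HA_pow (rho_u n \<omega>) (k + l) = HA_mul (HA_pow (rho_u n \<omega>) n) (HA_pow (rho_u n \<omega>) (k + l - n))"
      by (subst e(1)) (rule HA.vpow_add)
    also have "\<dots> = vscale \<omega> (HA_pow (rho_u n \<omega>) (k + l - n))"
      by (simp add: rho_u_pow_n vmul_vscale_left HA.vmul_unit_left HA.supported_vpow)
    finally show ?thesis using False e(2) by (simp add: A_bm_def)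
  qed (simp add: A_bm_def)
  have "HHA_mul (?f p) (?f q)
      = vtensor (vscale (fst (Hm p1 q1)) (vunit (snd (Hm p1 q1)))) (HA_pow (rho_u n \<omega>) (k + l))"
    unfolding P by (simp add: vtensor_mul vmul_vunit H.finite_basis M HA.vpow_add)
  also have "\<dots> = vscale (fst (tensor_bm Hm Am p q)) (?f (snd (tensor_bm Hm Am p q)))"
    unfolding P by (simp add: tensor_bm_apply vtensor_vscale_left vtensor_vscale_right wrap[symmetric]
        mult.commute)
  finally show "vscale (fst (tensor_bm Hm Am p q)) (?f (snd (tensor_bm Hm Am p q))) = HHA_mul (?f p) (?f q)"
    by simp
qed

lemma id_tensor_rho_diff: "id_tensor_rho n \<omega> (v - w) = id_tensor_rho n \<omega> v - id_tensor_rho n \<omega> w"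
  by (simp add: id_tensor_rho_def lin_diff)

lemma id_tensor_rho_one: "id_tensor_rho n \<omega> one_HA = one_HHA"
  using n_pos by (simp add: id_tensor_rho_eq lin_vunit HA.finite_basis HA.vpow_0 vtensor_vunit)

lemma id_tensor_rho_pow: "id_tensor_rho n \<omega> (HA_pow v k) = HHA_pow (id_tensor_rho n \<omega> v) k"
  by (induction k) (simp_all add: HA.vpow_0 HHA.vpow_0 id_tensor_rho_one HA.vpow_Suc HHA.vpow_Suc
      id_tensor_rho_mul)

lemma supported_id_tensor_rho: "supported_on (HB \<times> (HB \<times> AB)) (id_tensor_rho n \<omega> v)"
  unfolding id_tensor_rho_eq
  by (rule supported_lin) (auto intro!: supported_vtensor supported_on_vunit HA.supported_vpow)

lemma id_tensor_rho_T_u: "id_tensor_rho n \<omega> T_u = vscale coef_T (vtensor x_ginv (rho_u n \<omega>))"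
  using two_le_n by (simp add: T_u_eq id_tensor_rho_eq lin_vscale lin_vunit HA.finite_basis
      HA.vpow_Suc HA.vpow_0 HA.vmul_unit_right supported_rho_u x_ginv_def)

lemma id_tensor_rho_G_u: "id_tensor_rho n \<omega> G_u = vtensor g_inv (rho_u n \<omega>)"
  using two_le_n by (simp add: G_u_eq id_tensor_rho_eq lin_vunit HA.finite_basis
      HA.vpow_Suc HA.vpow_0 HA.vmul_unit_right supported_rho_u g_inv_eq)

lemma taft_Delta_x_eq: "Delta_x = vtensor taft_x one_H + vtensor taft_g taft_x"
  by (rule ext) (simp add: taft_Delta_x_def fun_arith_apply)

lemma supported_taft_Delta_x: "supported_on (HB \<times> HB) Delta_x"
  unfolding taft_Delta_x_eq taft_x_def taft_g_def
  using two_le_n by (intro supported_on_add supported_vtensor supported_on_vunit) auto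

lemma supported_taft_Delta_g: "supported_on (HB \<times> HB) Delta_g"
  using two_le_n by (auto simp: taft_Delta_g_def taft_g_def intro!: supported_vtensor supported_on_vunit)

lemma taft_Delta_g_pow: "HH_pow Delta_g j = vtensor (vunit (0, j mod n)) (vunit (0, j mod n))"
  by (simp add: taft_Delta_g_def vpow_tensor g_pow)

lemma taft_Delta_g_x: "HH_mul Delta_g Delta_x = vscale (inverse \<omega>) (HH_mul Delta_x Delta_g)"
  using two_le_n
  by (simp add: taft_Delta_x_eq taft_Delta_g_def taft_x_def taft_g_def vmul_add_left vmul_add_right
      vtensor_mul H_mul_vunit vtensor_vscale_left vtensor_vscale_right vscale_add_right)

text \<open>The summands \<open>x \<otimes> 1\<close> and \<open>g \<otimes> x\<close> of \<open>\<Delta>(x)\<close> satisfy \<open>(g \<otimes> x)(x \<otimes> 1) = \<omega>^-1 (x \<otimes> 1)(g \<otimes> x)\<close>,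
  so the q-binomial theorem applies.\<close>

lemma taft_Delta_x_pow_n: "HH_pow Delta_x n = 0"
proof -
  have "primitive_root n (inverse \<omega>)"
    using primitive by (auto simp: primitive_root_def power_inverse)
  moreover have "HH_mul (vtensor taft_g taft_x) (vtensor taft_x one_H)
      = vscale (inverse \<omega>) (HH_mul (vtensor taft_x one_H) (vtensor taft_g taft_x))"
    using two_le_n by (simp add: taft_x_def taft_g_def vtensor_mul H_mul_vunit vtensor_vscale_left)
  ultimately show ?thesis
    unfolding taft_Delta_x_eq
    using two_le_n x_pow_n
    by (intro HH.vpow_add_eq_0)
      (auto simp: vpow_tensor vtensor_zero_left vtensor_zero_right taft_x_def taft_g_def
        intro!: supported_vtensor supported_on_vunit)
qed

lemma taft_Delta_basis_eq:
  "p \<in> HB \<Longrightarrow> taft_Delta_basis n \<omega> p = HH_mul (HH_pow Delta_x (fst p)) (HH_pow Delta_g (snd p))"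
  by (cases p) (auto simp: taft_Delta_basis_def HH_basis_def HH_bm_def)

lemma supported_taft_Delta_basis: "supported_on (HB \<times> HB) (taft_Delta_basis n \<omega> p)"
  by (cases p) (auto simp: taft_Delta_basis_def HH_basis_def HH_bm_def intro: HH.supported_vmul)

lemma taft_Delta_basis_mul:
  assumes "p \<in> HB" "q \<in> HB"
  shows "HH_mul (taft_Delta_basis n \<omega> p) (taft_Delta_basis n \<omega> q)
       = vscale (fst (Hm p q)) (taft_Delta_basis n \<omega> (snd (Hm p q)))"
proof -
  obtain i j k l where P: "p = (i, j)" "q = (k, l)" by (cases p, cases q)
  let ?X = "HH_pow Delta_x" and ?G = "HH_pow Delta_g"
  have "HH_mul (taft_Delta_basis n \<omega> p) (taft_Delta_basis n \<omega> q)
      = HH_mul (?X i) (HH_mul (HH_mul (?G j) (?X k)) (?G l))"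
    using assms by (simp add: taft_Delta_basis_eq P HH.vmul_assoc)
  also have "\<dots> = vscale (inverse \<omega> ^ (k * j)) (HH_mul (?X (i + k)) (?G (j + l)))"
    by (simp add: HH.qcommute_vpow_vpow[OF supported_taft_Delta_g taft_Delta_g_x] vmul_vscale_left
        vmul_vscale_right HH.vmul_assoc HH.vpow_add)
  also have "?G (j + l) = ?G ((j + l) mod n)"
    by (simp add: taft_Delta_g_pow)
  finally have L: "HH_mul (taft_Delta_basis n \<omega> p) (taft_Delta_basis n \<omega> q)
      = vscale (inverse \<omega> ^ (k * j)) (HH_mul (?X (i + k)) (?G ((j + l) mod n)))" .
  show ?thesis
  proof (cases "i + k < n")
    case True
    then show ?thesis using L n_pos by (simp add: P taft_bm_def taft_Delta_basis_eq mult.commute)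
  next
    case False
    then have "?X (i + k) = HH_mul (?X (i + k - n)) (?X n)"
      by (simp add: HH.vpow_add[symmetric])
    then have "?X (i + k) = 0" by (simp add: taft_Delta_x_pow_n vmul_zero_right)
    then show ?thesis using L False by (simp add: P taft_bm_def vmul_zero_left)
  qed
qed

lemma Delta_tensor_id_eq:
  "Delta_tensor_id n \<omega> = lin (HB \<times> AB) (\<lambda>(p, k). reassoc (vtensor (taft_Delta_basis n \<omega> p) (vunit k)))"
  unfolding Delta_tensor_id_def HA_basis_def reassoc_def
  by (intro ext arg_cong[where f = "lin _"]) (auto simp: split_def)

lemma Delta_tensor_id_mul:
  "Delta_tensor_id n \<omega> (HA_mul v w) = HHA_mul (Delta_tensor_id n \<omega> v) (Delta_tensor_id n \<omega> w)"
  unfolding Delta_tensor_id_eq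
proof (rule lin_vmul[OF HA.finite_basis HA.mult_closed])
  let ?f = "\<lambda>(p, k). reassoc (vtensor (taft_Delta_basis n \<omega> p) (vunit k))"
  fix p q assume "p \<in> HB \<times> AB" "q \<in> HB \<times> AB"
  then obtain p1 k q1 l where P: "p = (p1, k)" "q = (q1, l)"
    and M: "p1 \<in> HB" "q1 \<in> HB" "k < n" "l < n" by auto
  have "HHA_mul (?f p) (?f q) = reassoc (vtensor (HH_mul (taft_Delta_basis n \<omega> p1) (taft_Delta_basis n \<omega> q1))
      (vmul AB Am (vunit k) (vunit l)))"
    unfolding P by (simp add: reassoc_mul vtensor_mul)
  also have "\<dots> = vscale (fst (tensor_bm Hm Am p q)) (?f (snd (tensor_bm Hm Am p q)))"
    unfolding P using M
    by (simp add: taft_Delta_basis_mul vmul_vunit A.finite_basis tensor_bm_apply vtensor_vscale_left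
        vtensor_vscale_right reassoc_vscale mult.commute)
  finally show "vscale (fst (tensor_bm Hm Am p q)) (?f (snd (tensor_bm Hm Am p q))) = HHA_mul (?f p) (?f q)"
    by simp
qed

lemma Delta_tensor_id_diff:
  "Delta_tensor_id n \<omega> (v - w) = Delta_tensor_id n \<omega> v - Delta_tensor_id n \<omega> w"
  by (simp add: Delta_tensor_id_def lin_diff)

lemma Delta_tensor_id_zero: "Delta_tensor_id n \<omega> 0 = 0"
  by (simp add: Delta_tensor_id_def lin_zero)

lemma Delta_tensor_id_one: "Delta_tensor_id n \<omega> one_HA = one_HHA"
proof -
  have "taft_Delta_basis n \<omega> (0, 0) = vunit ((0, 0), (0, 0))"
    using n_pos by (simp add: taft_Delta_basis_eq HH.vpow_0 HH.vmul_unit_left HH.supported_unit)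
  then show ?thesis
    using n_pos by (simp add: Delta_tensor_id_eq lin_vunit HA.finite_basis vtensor_vunit reassoc_vunit)
qed

lemma Delta_tensor_id_pow: "Delta_tensor_id n \<omega> (HA_pow v k) = HHA_pow (Delta_tensor_id n \<omega> v) k"
  by (induction k) (simp_all add: HA.vpow_0 HHA.vpow_0 Delta_tensor_id_one HA.vpow_Suc HHA.vpow_Suc
      Delta_tensor_id_mul)

lemma supported_Delta_tensor_id: "supported_on (HB \<times> (HB \<times> AB)) (Delta_tensor_id n \<omega> v)"
  unfolding Delta_tensor_id_eq
  by (rule supported_lin)
    (auto intro!: supported_reassoc supported_vtensor supported_taft_Delta_basis supported_on_vunit)

lemma Delta_tensor_id_T_u:
  "Delta_tensor_id n \<omega> T_u = vtensor one_H T_u + vscale coef_T (vtensor x_ginv G_u)"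
proof -
  have "taft_Delta_basis n \<omega> (1, n') = HH_mul Delta_x (vtensor g_inv g_inv)"
    using two_le_n by (simp add: taft_Delta_basis_eq taft_Delta_g_pow HH.vpow_Suc HH.vpow_0
        HH.vmul_unit_right supported_taft_Delta_x g_inv_eq)
  also have "\<dots> = vtensor x_ginv g_inv + vtensor one_H x_ginv"
    using two_le_n Suc_n'
    by (simp add: taft_Delta_x_eq taft_x_def taft_g_def g_inv_eq x_ginv_def vmul_add_left
        vtensor_mul H_mul_vunit)
  finally have Delta_x_ginv: "taft_Delta_basis n \<omega> (1, n') = vtensor x_ginv g_inv + vtensor one_H x_ginv" .
  have "Delta_tensor_id n \<omega> T_u = vscale coef_T (reassoc (vtensor (taft_Delta_basis n \<omega> (1, n')) A_u))"
    using two_le_n by (simp add: T_u_eq Delta_tensor_id_eq lin_vscale lin_vunit HA.finite_basis A_u_def)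
  also have "\<dots> = vtensor one_H T_u + vscale coef_T (vtensor x_ginv G_u)"
    by (simp only: Delta_x_ginv vtensor_add_left reassoc_add reassoc_tensor T_u_def G_u_def
        vtensor_vscale_right vscale_add_right add.commute)
  finally show ?thesis .
qed

lemma Delta_tensor_id_G_u: "Delta_tensor_id n \<omega> G_u = vtensor g_inv G_u"
proof -
  have Delta_g_inv: "taft_Delta_basis n \<omega> (0, n') = vtensor g_inv g_inv"
    using n_pos by (simp add: taft_Delta_basis_eq taft_Delta_g_pow HH.vpow_0 HH.vmul_unit_left
        g_inv_eq supported_vtensor supported_on_vunit)
  have "Delta_tensor_id n \<omega> G_u = reassoc (vtensor (taft_Delta_basis n \<omega> (0, n')) A_u)"
    using two_le_n by (simp add: G_u_eq Delta_tensor_id_eq lin_vunit HA.finite_basis A_u_def)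
  then show ?thesis
    by (simp only: Delta_g_inv reassoc_tensor G_u_def)
qed

lemma Delta_tensor_id_T_u_pow_n: "HHA_pow (Delta_tensor_id n \<omega> T_u) n = 0"
  by (simp flip: Delta_tensor_id_pow add: T_u_pow_n Delta_tensor_id_zero)

lemma Delta_tensor_id_rho_u_solves:
  "HHA_mul (one_HHA - Delta_tensor_id n \<omega> T_u) (Delta_tensor_id n \<omega> (rho_u n \<omega>)) = Delta_tensor_id n \<omega> G_u"
  using arg_cong[OF one_minus_T_u_mult_rho_u, of "Delta_tensor_id n \<omega>"]
  by (simp only: Delta_tensor_id_mul Delta_tensor_id_diff Delta_tensor_id_one)

lemma id_tensor_rho_rho_u_solves:
  "HHA_mul (one_HHA - Delta_tensor_id n \<omega> T_u) (id_tensor_rho n \<omega> (rho_u n \<omega>)) = Delta_tensor_id n \<omega> G_u"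
proof -
  let ?\<Phi> = "id_tensor_rho n \<omega>" and ?U = "vtensor one_H T_u"
  have one: "one_HHA = vtensor one_H one_HA"
    by (simp add: vtensor_vunit)
  have sU: "supported_on (HB \<times> (HB \<times> AB)) (one_HHA - ?U)"
    using n_pos by (simp add: supported_on_diff HHA.supported_unit supported_vtensor supported_on_vunit
        supported_T_u)
  have UT: "HHA_mul (one_HHA - ?U) (?\<Phi> T_u) = vscale coef_T (vtensor x_ginv G_u)"
    using two_le_n by (simp add: one vtensor_diff_right[symmetric] id_tensor_rho_T_u vmul_vscale_right vtensor_mul
        H.vmul_unit_left x_ginv_def supported_on_vunit one_minus_T_u_mult_rho_u)
  have UG: "HHA_mul (one_HHA - ?U) (?\<Phi> G_u) = vtensor g_inv G_u"
    using n_pos by (simp add: one vtensor_diff_right[symmetric] id_tensor_rho_G_u vtensor_mul H.vmul_unit_left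
        g_inv_eq supported_on_vunit one_minus_T_u_mult_rho_u)
  have "one_HHA - Delta_tensor_id n \<omega> T_u = HHA_mul (one_HHA - ?U) (one_HHA - ?\<Phi> T_u)"
    by (simp add: vmul_diff_right UT HHA.vmul_unit_right[OF sU] Delta_tensor_id_T_u diff_diff_eq)
  moreover have "HHA_mul (one_HHA - ?\<Phi> T_u) (?\<Phi> (rho_u n \<omega>)) = ?\<Phi> G_u"
    using arg_cong[OF one_minus_T_u_mult_rho_u, of ?\<Phi>]
    by (simp only: id_tensor_rho_mul id_tensor_rho_diff id_tensor_rho_one)
  ultimately show ?thesis
    by (simp only: HHA.vmul_assoc UG Delta_tensor_id_G_u)
qed

lemma id_tensor_rho_eq_Delta_tensor_id_rho_u:
  "id_tensor_rho n \<omega> (rho_u n \<omega>) = Delta_tensor_id n \<omega> (rho_u n \<omega>)"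
proof -
  have "HHA_mul (one_HHA - Delta_tensor_id n \<omega> T_u)
      (id_tensor_rho n \<omega> (rho_u n \<omega>) - Delta_tensor_id n \<omega> (rho_u n \<omega>)) = 0"
    by (simp only: vmul_diff_right id_tensor_rho_rho_u_solves Delta_tensor_id_rho_u_solves diff_self)
  then show ?thesis
    using HHA.nilpotent_one_minus_cancel[OF supported_on_diff[OF supported_id_tensor_rho
          supported_Delta_tensor_id] _ Delta_tensor_id_T_u_pow_n]
    by simp
qed

lemma coaction_on_rho:
  "id_tensor_rho n \<omega> (rho n \<omega> a) = Delta_tensor_id n \<omega> (rho n \<omega> a)"
proof -
  have "id_tensor_rho n \<omega> (rho n \<omega> a) = lin AB (\<lambda>k. id_tensor_rho n \<omega> (HA_pow (rho_u n \<omega>) k)) a"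
    unfolding rho_eq id_tensor_rho_eq by (rule lin_lin)
  also have "\<dots> = lin AB (\<lambda>k. Delta_tensor_id n \<omega> (HA_pow (rho_u n \<omega>) k)) a"
    by (simp add: id_tensor_rho_pow Delta_tensor_id_pow id_tensor_rho_eq_Delta_tensor_id_rho_u)
  also have "\<dots> = Delta_tensor_id n \<omega> (rho n \<omega> a)"
    unfolding rho_eq Delta_tensor_id_eq by (rule lin_lin[symmetric])
  finally show ?thesis .
qed

end

theorem corollary4p3:
  fixes \<omega> :: "'k::field_char_0" and n :: nat
  assumes "2 \<le> n" and "primitive_root n \<omega>"
  shows "\<forall>a :: nat \<Rightarrow> 'k.
           id_tensor_rho n \<omega> (rho n \<omega> a) = Delta_tensor_id n \<omega> (rho n \<omega> a)"
proof -
  interpret taft_primitive n \<omega>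
    using assms by unfold_locales (simp_all add: primitive_root_def)
  show ?thesis using coaction_on_rho by blast
qed

end
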